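(* Let $G=(V,\mathcal E,w)$ be an undirected, connected, weighted graph on $n$ nodes. Let: - $E\in\mathbb R^{n\times|\mathcal E|}$ be its signed incidence matrix (arbitrary orientation); - $W=\mathrm{diag}(w(e))_{e\in\mathcal E}$; - $L=EWE^T$, with largest eigenvalue $\lambda_n$. Let $\tau\ge0$ with $\tau\lambda_n<\pi/2$. Consider the consensus network with communication channel noise $$\dot x_i=\sum_{e=\{i,j\}\in\mathcal E}a_{ij}\big(x_j(t-\tau)-x_i(t-\tau)+\xi_e(t)\big),$$ that is, $$\dot x(t)=-L\,x(t-\tau)+EW\,\xi(t),\qquad y=M_nx,$$ where $(\xi_e)_{e\in\mathcal E}$ are mutually independent zero-mean Gaussian white noises with intensities $\sigma_e^2$. Then for every link $e=\{i,j\}\in\mathcal E$, $$\nu_e=\frac12\,w(e)^2\,r_e\Big(L\cos(\tau L)^{-1}\big(M_n-\sin(\tau L)\big)\Big).$$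
   Context: Notation: - $a_{ij}=w(\{i,j\})$. - $M_n=I_n-\frac1n\mathbf1\mathbf1^T$. - $X^\dagger$ is the Moore–Penrose pseudo-inverse. - $\cos(X)$ and $\sin(X)$ are the matrix power-series functions; $\cos(\tau L)$ is invertible since $\tau\lambda_n<\pi/2$. - For a symmetric matrix $X$ and $e=\{i,j\}$, $r_e(X)=[X^\dagger]_{ii}+[X^\dagger]_{jj}-2[X^\dagger]_{ij}$. The performance is $$\rho_{ss}=\lim_{t\to\infty}\mathbb E[y^Ty]=\frac1{2\pi}\int\mathrm{Tr}[G(j\omega)^HG(j\omega)]d\omega,\qquad G(s)=M_n(sI+e^{-\tau s}L)^{-1}EW\,\mathrm{diag}(\sigma_e).$$ The link centrality is $\nu_e=\partial\rho_{ss}/\partial\sigma_e^2$. *)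

theory Defs
  imports "HOL-Analysis.Analysis"
begin

(* Matrices are HOL-Analysis matrices  'a^'c^'r  (r rows, c columns).
   Vertices of the graph are the elements of a finite type 'n,
   edges are the elements of a finite type 'e; each edge e has an
   (arbitrary) orientation  src e -> dst e. *)

definition simple_graph :: "('e::finite \<Rightarrow> 'n::finite) \<Rightarrow> ('e \<Rightarrow> 'n) \<Rightarrow> bool" where
  "simple_graph src dst \<longleftrightarrow>
     (\<forall>e. src e \<noteq> dst e) \<and>
     (\<forall>e f. {src e, dst e} = {src f, dst f} \<longrightarrow> e = f)"

definition adj_rel :: "('e::finite \<Rightarrow> 'n::finite) \<Rightarrow> ('e \<Rightarrow> 'n) \<Rightarrow> ('n \<times> 'n) set" where
  "adj_rel src dst = {(src e, dst e) | e. True} \<union> {(dst e, src e) | e. True}"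

definition graph_connected :: "('e::finite \<Rightarrow> 'n::finite) \<Rightarrow> ('e \<Rightarrow> 'n) \<Rightarrow> bool" where
  "graph_connected src dst \<longleftrightarrow> (\<forall>u v. (u, v) \<in> (adj_rel src dst)\<^sup>*)"

definition incidence :: "('e::finite \<Rightarrow> 'n::finite) \<Rightarrow> ('e \<Rightarrow> 'n) \<Rightarrow> real^'e^'n" where
  "incidence src dst = (\<chi> i e. if i = src e then 1 else if i = dst e then -1 else 0)"

definition diag_mat :: "('e::finite \<Rightarrow> 'a::zero) \<Rightarrow> 'a^'e^'e" where
  "diag_mat d = (\<chi> i j. if i = j then d i else 0)"

definition laplacian :: "('e::finite \<Rightarrow> 'n::finite) \<Rightarrow> ('e \<Rightarrow> 'n) \<Rightarrow> ('e \<Rightarrow> real) \<Rightarrow> real^'n^'n" where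
  "laplacian src dst w =
     incidence src dst ** diag_mat w ** transpose (incidence src dst)"

definition eigenvalues :: "real^'n^'n \<Rightarrow> real set" where
  "eigenvalues A = {c. \<exists>v. v \<noteq> 0 \<and> A *v v = c *\<^sub>R v}"

definition largest_eigenvalue :: "real^'n^'n \<Rightarrow> real" where
  "largest_eigenvalue A = Max (eigenvalues A)"

definition centering :: "real^'n::finite^'n" where
  "centering = mat 1 - (1 / real CARD('n)) *\<^sub>R (\<chi> i j. 1)"

fun mpow :: "'a::semiring_1^'n::finite^'n \<Rightarrow> nat \<Rightarrow> 'a^'n^'n" where
  "mpow A 0 = mat 1"
| "mpow A (Suc k) = A ** mpow A k"

definition mat_cos :: "real^'n::finite^'n \<Rightarrow> real^'n^'n" where
  "mat_cos X = (\<Sum>k. ((-1) ^ k / fact (2 * k)) *\<^sub>R mpow X (2 * k))"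

definition mat_sin :: "real^'n::finite^'n \<Rightarrow> real^'n^'n" where
  "mat_sin X = (\<Sum>k. ((-1) ^ k / fact (2 * k + 1)) *\<^sub>R mpow X (2 * k + 1))"

definition pinv :: "real^'m::finite^'n::finite \<Rightarrow> real^'n^'m" where
  "pinv X = (THE Y. X ** Y ** X = X \<and> Y ** X ** Y = Y \<and>
                    transpose (X ** Y) = X ** Y \<and> transpose (Y ** X) = Y ** X)"

definition r_eff :: "real^'n::finite^'n \<Rightarrow> 'n \<Rightarrow> 'n \<Rightarrow> real" where
  "r_eff X i j = pinv X $ i $ i + pinv X $ j $ j - 2 * pinv X $ i $ j"

definition cmat :: "real^'c::finite^'r::finite \<Rightarrow> complex^'c^'r" where
  "cmat A = (\<chi> i j. complex_of_real (A $ i $ j))"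

definition conj_transpose :: "complex^'c::finite^'r::finite \<Rightarrow> complex^'r^'c" where
  "conj_transpose A = (\<chi> i j. cnj (A $ j $ i))"

text \<open>Transfer function G(s) = M_n (sI + e^{-tau s} L)^{-1} E W diag(sigma_e),
  with the noise intensities given as sigma2 e = sigma_e^2 (sigma_e = sqrt (sigma2 e)).\<close>
definition transfer :: "('e::finite \<Rightarrow> 'n::finite) \<Rightarrow> ('e \<Rightarrow> 'n) \<Rightarrow> ('e \<Rightarrow> real) \<Rightarrow> real
     \<Rightarrow> ('e \<Rightarrow> real) \<Rightarrow> complex \<Rightarrow> complex^'e^'n" where
  "transfer src dst w \<tau> sigma2 s =
     cmat centering **
     matrix_inv (mat s + mat (exp (- complex_of_real \<tau> * s)) ** cmat (laplacian src dst w)) **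
     cmat (incidence src dst ** diag_mat w ** diag_mat (\<lambda>e. sqrt (sigma2 e)))"

definition rho_ss :: "('e::finite \<Rightarrow> 'n::finite) \<Rightarrow> ('e \<Rightarrow> 'n) \<Rightarrow> ('e \<Rightarrow> real) \<Rightarrow> real
     \<Rightarrow> ('e \<Rightarrow> real) \<Rightarrow> real" where
  "rho_ss src dst w \<tau> sigma2 =
     (1 / (2 * pi)) * integral UNIV (\<lambda>\<omega>::real.
        Re (trace (conj_transpose (transfer src dst w \<tau> sigma2 (\<i> * complex_of_real \<omega>))
                   ** transfer src dst w \<tau> sigma2 (\<i> * complex_of_real \<omega>))))"

end

(*
  Everything in the statement is a function of L, hence diagonal in an orthonormal eigenbasis of L.
  The mode b of eigenvalue lambda > 0 has transfer function 1 / (s + lambda e^(-tau s)), and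

    integral over the real line of |i w + lambda e^(-i tau w)|^(-2) dw
      = pi cos (lambda tau) / (lambda (1 - sin (lambda tau))),

  by a partial-fraction decomposition of the integrand and Cauchy's theorem on right half discs;
  lambda tau < pi/2 keeps s + lambda e^(-tau s) free of zeros in the closed right half plane.
  The constant mode (lambda = 0) is annihilated by M_n. Summing over modes,

    rho_ss = 1/2 sum_e w(e)^2 sigma_e^2
               sum_(b nonconstant) (b_i - b_j)^2 cos (lambda_b tau) / (lambda_b (1 - sin (lambda_b tau))),

  and the inner sum is r_e(X) for X = L cos(tau L)^(-1) (M_n - sin(tau L)), because the
  pseudo-inverse of X has eigenvalue cos (lambda tau) / (lambda (1 - sin (lambda tau))) on a
  nonconstant mode and 0 on the constant one. So rho_ss is affine in each sigma_e^2, with slope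
  w(e)^2 r_e(X) / 2.
*)
theory Submission
  imports Defs "HOL-Complex_Analysis.Complex_Analysis"
begin

(* The Complex_Analysis import reactivates the power-series notation "$", which clashes with vec_nth. *)
no_notation fps_nth (infixl \<open>$\<close> 75)

lemma lorentzian_has_integral:
  fixes l r :: real
  assumes "0 < l" "0 \<le> r"
  shows "((\<lambda>x. l / (x\<^sup>2 + l\<^sup>2)) has_integral 2 * arctan (r / l)) {-r..r}"
proof -
  have "((\<lambda>x. l / (x\<^sup>2 + l\<^sup>2)) has_integral arctan (r / l) - arctan (-r / l)) {-r..r}"
  proof (rule fundamental_theorem_of_calculus)
    fix x
    have "((\<lambda>x. arctan (x / l)) has_real_derivative inverse (1 + (x / l)\<^sup>2) * (1 / l)) (at x)"
      using assms by (intro DERIV_chain2[OF DERIV_arctan]) (auto intro!: derivative_eq_intros)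
    moreover have "inverse (1 + (x / l)\<^sup>2) * (1 / l) = l / (x\<^sup>2 + l\<^sup>2)"
      using assms by (simp add: field_simps power2_eq_square)
    ultimately show "((\<lambda>x. arctan (x / l)) has_vector_derivative l / (x\<^sup>2 + l\<^sup>2)) (at x within {-r..r})"
      using has_real_derivative_iff_has_vector_derivative has_vector_derivative_at_within by metis
  qed (use assms in simp)
  thus ?thesis by (simp add: arctan_minus)
qed

lemma nonneg_has_integral_UNIV_of_intervals:
  fixes f :: "real \<Rightarrow> real"
  assumes nonneg: "\<And>x. 0 \<le> f x" and cont: "continuous_on UNIV f"
    and lim: "(\<lambda>k. integral {-real k..real k} f) \<longlonglongrightarrow> I"
  shows "(f has_integral I) UNIV"
proof -
  define g where "g k x = (if x \<in> {-real k..real k} then f x else 0)" for k :: nat and x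
  have g_int: "(g k has_integral integral {-real k..real k} f) UNIV" for k
    using integrable_continuous_interval[OF continuous_on_subset[OF cont]]
      has_integral_restrict_UNIV[of "{-real k..real k}" f] unfolding g_def by blast
  hence g_integral: "(\<lambda>k. integral UNIV (g k)) = (\<lambda>k. integral {-real k..real k} f)"
    using integral_unique by blast
  have "f integrable_on UNIV \<and> (\<lambda>k. integral UNIV (g k)) \<longlonglongrightarrow> integral UNIV f"
  proof (rule monotone_convergence_increasing)
    show "g k integrable_on UNIV" for k using g_int by blast
    show "g k x \<le> g (Suc k) x" for k x using nonneg[of x] by (auto simp: g_def)
    show "(\<lambda>k. g k x) \<longlonglongrightarrow> f x" for x
    proof -
      have "eventually (\<lambda>k. \<bar>x\<bar> \<le> real k) sequentially"
        using filterlim_real_sequentially unfolding filterlim_at_top by blast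
      hence "eventually (\<lambda>k. f x = g k x) sequentially"
        by eventually_elim (auto simp: g_def)
      thus ?thesis by (rule Lim_transform_eventually[OF tendsto_const])
    qed
    show "bounded (range (\<lambda>k. integral UNIV (g k)))"
      unfolding g_integral using lim by (metis Bseq_eq_bounded convergent_def convergent_imp_Bseq)
  qed
  thus ?thesis using lim LIMSEQ_unique g_integral by (metis has_integral_integral)
qed

lemma right_half_circle_image:
  assumes "0 < r" "z \<in> path_image (part_circlepath 0 r (-pi/2) (pi/2))"
  shows "cmod z = r" "0 \<le> Re z"
proof -
  obtain x where x: "x \<in> closed_segment (-pi/2) (pi/2)" "z = of_real r * cis x"
    using assms(2) unfolding path_image_part_circlepath' by auto
  hence "cos x \<ge> 0" by (intro cos_ge_zero) (auto simp: closed_segment_eq_real_ivl)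
  thus "cmod z = r" "0 \<le> Re z" using x assms(1) by (simp_all add: norm_mult)
qed

lemma interior_subset_Re_pos:
  assumes "x \<in> interior ({s. 0 \<le> Re s} \<inter> A)"
  shows "0 < Re x"
proof -
  obtain e where e: "e > 0" "ball x e \<subseteq> {s. 0 \<le> Re s} \<inter> A" using assms mem_interior by blast
  have "x - of_real (e/2) \<in> ball x e" using e by (simp add: dist_norm)
  hence "x - of_real (e/2) \<in> {s. 0 \<le> Re s}" using e(2) by blast
  thus ?thesis using e(1) by simp
qed

lemma right_half_disc_Cauchy:
  fixes F :: "complex \<Rightarrow> complex"
  assumes cont: "continuous_on {s. 0 \<le> Re s} F" and holo: "F holomorphic_on {s. 0 < Re s}"
    and r: "0 < r"
  obtains I where "(F has_contour_integral I) (linepath (- \<i> * of_real r) (\<i> * of_real r))"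
    and "(F has_contour_integral I) (part_circlepath 0 r (-pi/2) (pi/2))"
proof -
  define S where "S = {s. 0 \<le> Re s} \<inter> cball 0 r"
  define diameter where "diameter = linepath (- \<i> * of_real r) (\<i> * of_real r)"
  define arc where "arc = part_circlepath 0 r (-pi/2) (pi/2)"
  have "convex S" unfolding S_def
    using convex_halfspace_Re_ge[of 0] by (intro convex_Int convex_cball) auto
  have cont_S: "continuous_on S F" unfolding S_def by (rule continuous_on_subset[OF cont]) auto
  have diff_S: "F field_differentiable at x" if "x \<in> interior S" for x
    using holo holomorphic_on_imp_differentiable_at[of F "{s. 0 < Re s}" x] open_halfspace_Re_gt[of 0]
      interior_subset_Re_pos[OF that[unfolded S_def]] by auto
  have arc_S: "path_image arc \<subseteq> S"
    using right_half_circle_image[OF r] by (auto simp: S_def arc_def)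
  have "- \<i> * of_real r \<in> S" "\<i> * of_real r \<in> S" using r by (auto simp: S_def norm_mult)
  hence diameter_S: "path_image diameter \<subseteq> S"
    unfolding diameter_def using closed_segment_subset \<open>convex S\<close> by simp
  have ends: "pathstart arc = - \<i> * of_real r" "pathfinish arc = \<i> * of_real r"
    "pathstart diameter = - \<i> * of_real r" "pathfinish diameter = \<i> * of_real r"
    by (simp_all add: arc_def diameter_def complex_eq_iff Re_exp Im_exp)
  have "F contour_integrable_on diameter" unfolding diameter_def
    by (rule contour_integrable_continuous_linepath, rule continuous_on_subset[OF cont_S])
       (use diameter_S in \<open>simp add: diameter_def\<close>)
  then obtain I1 where I1: "(F has_contour_integral I1) diameter"
    unfolding contour_integrable_on_def by blast
  obtain I2 where I2: "(F has_contour_integral I2) arc"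
    using contour_integrable_continuous_part_circlepath continuous_on_subset[OF cont_S arc_S]
    unfolding arc_def contour_integrable_on_def by blast
  have valid: "valid_path diameter" "valid_path arc" by (simp_all add: diameter_def arc_def)
  have "(F has_contour_integral (-I2)) (reversepath arc)"
    by (rule has_contour_integral_reversepath[OF valid(2) I2])
  hence "(F has_contour_integral (I1 + - I2)) (diameter +++ reversepath arc)"
    by (rule has_contour_integral_join[OF I1]) (use valid ends in auto)
  moreover have "(F has_contour_integral 0) (diameter +++ reversepath arc)"
    by (rule Cauchy_theorem_convex[OF cont_S \<open>convex S\<close> finite.emptyI])
       (use diff_S valid diameter_S arc_S ends in \<open>auto simp: path_image_join\<close>)
  ultimately have "I1 = I2" by (metis has_contour_integral_unique add_eq_0_iff2 minus_minus)
  thus thesis using that I1 I2 unfolding diameter_def arc_def by blast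
qed

lemma imaginary_axis_integral_bound:
  fixes F :: "complex \<Rightarrow> complex"
  assumes cont: "continuous_on {s. 0 \<le> Re s} F" and holo: "F holomorphic_on {s. 0 < Re s}"
    and r: "0 < r" and bound: "\<And>s. cmod s = r \<Longrightarrow> 0 \<le> Re s \<Longrightarrow> cmod (F s) \<le> C"
  obtains I where "((\<lambda>y. F (Complex 0 y)) has_integral I) {-r..r}" and "cmod I \<le> pi * r * C"
proof -
  obtain I where diameter: "(F has_contour_integral I) (linepath (- \<i> * of_real r) (\<i> * of_real r))"
    and arc: "(F has_contour_integral I) (part_circlepath 0 r (-pi/2) (pi/2))"
    using right_half_disc_Cauchy[OF cont holo r] by blast
  have "cmod (F (of_real r)) \<le> C" using bound r by simp
  hence "0 \<le> C" using norm_ge_zero order_trans by blast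
  have "cmod I \<le> C * r * (pi/2 - -pi/2)"
    by (rule has_contour_integral_bound_part_circlepath[OF arc])
       (use r \<open>0 \<le> C\<close> bound right_half_circle_image[OF r] in auto)
  moreover have "((\<lambda>y. F (Complex 0 y)) has_integral (-\<i> * I)) {-r..r}"
    using diameter has_contour_integral_linepath_same_Re_iff[of "- \<i> * of_real r" 0 "\<i> * of_real r" "-r" r F I] r
    by simp
  ultimately show thesis by (intro that[of "-\<i> * I"]) (simp_all add: norm_mult mult_ac)
qed

lemma tendsto_divide_vanishing_factor:
  fixes N g :: "complex \<Rightarrow> complex"
  assumes N: "(N has_field_derivative N') (at x)" "N x = 0"
    and g: "continuous (at x within S) g" "g x \<noteq> 0"
  shows "((\<lambda>y. N y / ((y - x) * g y)) \<longlongrightarrow> N' / g x) (at x within S)"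
proof -
  have "((\<lambda>y. (N y - N x) / (y - x) / g y) \<longlongrightarrow> N' / g x) (at x within S)"
    using N(1) g by (intro tendsto_divide) (auto simp: has_field_derivative_iff continuous_within
        intro: has_field_derivative_at_within tendsto_within_subset)
  thus ?thesis using N(2) by (simp add: divide_divide_eq_left mult.commute)
qed

section \<open>The squared gain of the scalar delay equation\<close>

definition delay_char :: "real \<Rightarrow> real \<Rightarrow> complex \<Rightarrow> complex" where
  "delay_char l t s = s + of_real l * exp (- of_real t * s)"

definition sq_gain :: "real \<Rightarrow> real \<Rightarrow> real \<Rightarrow> real" where
  "sq_gain l t \<omega> = 1 / (cmod (delay_char l t (\<i> * of_real \<omega>)))\<^sup>2"

lemma isCont_delay_char: "isCont (delay_char l t) s"
  unfolding delay_char_def by (intro continuous_intros)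

lemma delay_char_holomorphic: "delay_char l t holomorphic_on S"
  unfolding delay_char_def[abs_def] by (intro holomorphic_intros)

lemma delay_char_nonzero:
  assumes l: "0 < l" and t: "0 \<le> t" and lt: "l * t < pi / 2" and s: "0 \<le> Re s"
  shows "delay_char l t s \<noteq> 0"
proof
  assume "delay_char l t s = 0"
  hence eq: "s = - (of_real l * exp (- of_real t * s))"
    unfolding delay_char_def by (simp add: add_eq_0_iff2)
  have "cmod s = l * exp (- t * Re s)" using l by (subst eq) (simp add: norm_mult)
  also have "\<dots> \<le> l" using l t s by (simp add: mult_nonneg_nonneg)
  finally have "\<bar>Im s\<bar> \<le> l" using abs_Im_le_cmod[of s] by linarith
  hence "\<bar>t * Im s\<bar> \<le> t * l" using t by (simp add: abs_mult mult_left_mono)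
  hence "\<bar>t * Im s\<bar> < pi / 2" using lt by (simp add: mult.commute)
  hence cos_pos: "cos (t * Im s) > 0" by (intro cos_gt_zero_pi) auto
  have "Re s = - l * (exp (- t * Re s) * cos (t * Im s))"
    by (subst eq) (simp add: Re_exp Im_exp)
  also have "\<dots> < 0" using l cos_pos by simp
  finally show False using s by simp
qed

lemma sq_gain_continuous:
  assumes "0 < l" "0 \<le> t" "l * t < pi / 2"
  shows "continuous_on UNIV (sq_gain l t)"
  unfolding sq_gain_def[abs_def] delay_char_def
  by (intro continuous_intros) (use delay_char_nonzero[OF assms] in \<open>auto simp: delay_char_def\<close>)

locale delay_gain =
  fixes l t :: real
  assumes l_pos: "0 < l" and t_nonneg: "0 \<le> t" and lt_less: "l * t < pi / 2"
begin

lemma sin_lt_one: "sin (l * t) < 1"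
proof -
  have "0 \<le> l * t" using l_pos t_nonneg by simp
  hence "sin (l * t) < sin (pi / 2)" using lt_less by (intro sin_monotone_2pi) auto
  thus ?thesis by simp
qed

lemma char_nonzero: "0 \<le> Re s \<Longrightarrow> delay_char l t s \<noteq> 0"
  using delay_char_nonzero l_pos t_nonneg lt_less by blast

text \<open>Partial fractions: on the imaginary axis \<open>sq_gain = 2 Re kernel\<close>. The coefficient
  \<open>pole_coeff\<close> is chosen so that \<open>numer\<close> vanishes at \<open>\<plusminus>\<i> l\<close>, which makes \<open>kernel\<close>
  holomorphic on the right half plane. As \<open>kernel s \<sim> pole_coeff / s\<close> at infinity, the
  \<open>remainder\<close> is \<open>O(|s|\<^sup>-\<^sup>2)\<close> and contributes nothing in the limit, leaving the elementary
  term \<open>pole_coeff / (s + l)\<close>.\<close>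

definition pole_coeff :: real where
  "pole_coeff = cos (l * t) / (2 * l * (1 - sin (l * t)))"

definition numer :: "complex \<Rightarrow> complex" where
  "numer s = of_real pole_coeff * s * delay_char l t s - (s - of_real l * exp (- of_real t * s)) / 2"

definition kernel :: "complex \<Rightarrow> complex" where
  "kernel s = (if s\<^sup>2 + (of_real l)\<^sup>2 = 0 then deriv numer s / (2 * s * delay_char l t s)
              else numer s / ((s\<^sup>2 + (of_real l)\<^sup>2) * delay_char l t s))"

definition remainder :: "complex \<Rightarrow> complex" where
  "remainder s = kernel s - of_real pole_coeff / (s + of_real l)"

lemma poles_eq: "s\<^sup>2 + (of_real l)\<^sup>2 = 0 \<longleftrightarrow> s = \<i> * of_real l \<or> s = - (\<i> * of_real l)"
proof -
  have "s\<^sup>2 + (of_real l)\<^sup>2 = (s - \<i> * of_real l) * (s + \<i> * of_real l)"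
    by (simp add: algebra_simps power2_eq_square)
  thus ?thesis by (simp add: add_eq_0_iff2)
qed

lemma Re_pole: "s\<^sup>2 + (of_real l)\<^sup>2 = 0 \<Longrightarrow> Re s = 0"
  unfolding poles_eq by auto

lemma numer_poles: "s\<^sup>2 + (of_real l)\<^sup>2 = 0 \<Longrightarrow> numer s = 0"
proof -
  assume "s\<^sup>2 + (of_real l)\<^sup>2 = 0"
  moreover have "(cos (l * t))\<^sup>2 + (sin (l * t))\<^sup>2 = 1" by simp
  moreover have "1 - sin (l * t) \<noteq> 0" using sin_lt_one by simp
  ultimately show ?thesis
    unfolding poles_eq
    apply (auto simp: numer_def delay_char_def complex_eq_iff Re_exp Im_exp pole_coeff_def mult.commute[of t])
     apply (simp_all add: field_simps)
     apply (simp_all add: cos_squared_eq[unfolded power2_eq_square] algebra_simps)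
    done
qed

lemma Re_numer_cnj_imag_axis:
  "Re (numer (\<i> * of_real \<omega>) * cnj (delay_char l t (\<i> * of_real \<omega>))) = (l\<^sup>2 - \<omega>\<^sup>2) / 2"
  apply (simp add: numer_def delay_char_def Re_exp Im_exp algebra_simps power2_eq_square)
  apply (simp add: cos_squared_eq[unfolded power2_eq_square] algebra_simps field_simps)
  done

lemma kernel_imag_axis:
  assumes "\<omega>\<^sup>2 \<noteq> l\<^sup>2"
  shows "2 * Re (kernel (\<i> * of_real \<omega>)) = sq_gain l t \<omega>"
proof -
  define s where "s = \<i> * of_real \<omega>"
  define A where "A = delay_char l t s"
  have "A \<noteq> 0" unfolding A_def s_def by (rule char_nonzero) simp
  have s_sq: "s\<^sup>2 + (of_real l)\<^sup>2 = of_real (l\<^sup>2 - \<omega>\<^sup>2)" by (simp add: s_def power_mult_distrib)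
  have "s\<^sup>2 + (of_real l)\<^sup>2 \<noteq> 0" using assms s_sq by (metis of_real_eq_0_iff right_minus_eq)
  hence "kernel s = numer s / (of_real (l\<^sup>2 - \<omega>\<^sup>2) * A)"
    by (simp add: kernel_def s_sq A_def)
  also have "\<dots> = numer s * cnj A / (of_real (l\<^sup>2 - \<omega>\<^sup>2) * (A * cnj A))"
    using \<open>A \<noteq> 0\<close> by (simp add: mult.assoc)
  also have "\<dots> = numer s * cnj A / of_real ((l\<^sup>2 - \<omega>\<^sup>2) * (cmod A)\<^sup>2)"
    using complex_norm_square[of A] by simp
  finally have "Re (kernel s) = Re (numer s * cnj A) / ((l\<^sup>2 - \<omega>\<^sup>2) * (cmod A)\<^sup>2)"
    by (simp add: Re_divide_of_real)
  also have "\<dots> = 1 / (2 * (cmod A)\<^sup>2)"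
    using assms \<open>A \<noteq> 0\<close> unfolding A_def s_def Re_numer_cnj_imag_axis by (simp add: field_simps)
  finally show ?thesis by (simp add: sq_gain_def A_def s_def)
qed

lemma numer_holomorphic: "numer holomorphic_on UNIV"
  unfolding numer_def[abs_def] delay_char_def by (intro holomorphic_intros) auto

lemma kernel_holomorphic: "kernel holomorphic_on {s. 0 < Re s}"
proof -
  have "(\<lambda>s. numer s / ((s\<^sup>2 + (of_real l)\<^sup>2) * delay_char l t s)) holomorphic_on {s. 0 < Re s}"
    using char_nonzero Re_pole
    by (intro holomorphic_intros holomorphic_on_subset[OF numer_holomorphic] delay_char_holomorphic)
       force+
  thus ?thesis by (rule holomorphic_transform) (auto simp: kernel_def dest: Re_pole)
qed

lemma kernel_isCont:
  assumes "x\<^sup>2 + (of_real l)\<^sup>2 \<noteq> 0" "delay_char l t x \<noteq> 0"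
  shows "isCont kernel x"
proof -
  have "open {s::complex. s\<^sup>2 + (of_real l)\<^sup>2 \<noteq> 0}"
    by (intro open_Collect_neq continuous_intros)
  from eventually_nhds_in_open[OF this] assms(1)
  have "eventually (\<lambda>s. s\<^sup>2 + (of_real l)\<^sup>2 \<noteq> 0) (nhds x)" by simp
  hence "eventually (\<lambda>s. numer s / ((s\<^sup>2 + (of_real l)\<^sup>2) * delay_char l t s) = kernel s) (nhds x)"
    by eventually_elim (simp add: kernel_def)
  moreover have "isCont numer x"
    using numer_holomorphic holomorphic_on_imp_continuous_on continuous_on_eq_continuous_at by blast
  hence "isCont (\<lambda>s. numer s / ((s\<^sup>2 + (of_real l)\<^sup>2) * delay_char l t s)) x"
    using assms by (intro continuous_intros isCont_delay_char) auto
  ultimately show ?thesis using isCont_cong by metis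
qed

text \<open>At the poles \<open>\<plusminus>\<i> l\<close> the singularity is removable because \<open>numer\<close> vanishes there.\<close>

lemma kernel_continuous_at_pole:
  assumes pole: "x\<^sup>2 + (of_real l)\<^sup>2 = 0"
  shows "continuous (at x within S) kernel"
proof -
  have "x \<noteq> 0" using pole l_pos by auto
  have "delay_char l t x \<noteq> 0" using Re_pole[OF pole] char_nonzero by simp
  have lim: "((\<lambda>y. numer y / ((y - x) * ((y + x) * delay_char l t y)))
      \<longlongrightarrow> deriv numer x / ((x + x) * delay_char l t x)) (at x within S)"
  proof (rule tendsto_divide_vanishing_factor)
    show "(numer has_field_derivative deriv numer x) (at x)"
      using numer_holomorphic holomorphic_derivI by blast
    show "numer x = 0" using pole by (rule numer_poles)
    have "continuous (at x within S) (delay_char l t)"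
      by (rule continuous_at_imp_continuous_at_within[OF isCont_delay_char])
    thus "continuous (at x within S) (\<lambda>y. (y + x) * delay_char l t y)"
      by (intro continuous_intros)
    show "(x + x) * delay_char l t x \<noteq> 0"
      using \<open>delay_char l t x \<noteq> 0\<close> \<open>x \<noteq> 0\<close> by simp
  qed
  have "eventually (\<lambda>y. y \<noteq> x) (at x within S)"
    by (simp add: eventually_at_filter)
  moreover have "eventually (\<lambda>y. y \<noteq> -x) (at x within S)"
    using \<open>x \<noteq> 0\<close> by (intro tendsto_imp_eventually_ne[OF tendsto_ident_at]) auto
  ultimately have "eventually (\<lambda>y. numer y / ((y - x) * ((y + x) * delay_char l t y)) = kernel y)
      (at x within S)"
  proof eventually_elim
    case (elim y)
    have "x\<^sup>2 = - ((of_real l)\<^sup>2)" using pole by (simp add: add_eq_0_iff2)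
    hence "y\<^sup>2 + (of_real l)\<^sup>2 = (y - x) * (y + x)"
      by (simp add: algebra_simps power2_eq_square)
    moreover have "(y - x) * (y + x) \<noteq> 0" using elim by (auto simp: add_eq_0_iff2)
    ultimately show ?case by (simp add: kernel_def mult.assoc)
  qed
  with lim have "(kernel \<longlongrightarrow> deriv numer x / ((x + x) * delay_char l t x)) (at x within S)"
    by (rule Lim_transform_eventually)
  moreover have "kernel x = deriv numer x / ((x + x) * delay_char l t x)"
    using pole unfolding kernel_def by (simp only: if_True mult_2 simp_thms)
  ultimately show ?thesis by (simp add: continuous_within)
qed

lemma kernel_continuous: "continuous_on {s. 0 \<le> Re s} kernel"
  unfolding continuous_on_eq_continuous_within
proof
  fix x :: complex assume "x \<in> {s. 0 \<le> Re s}"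
  hence "delay_char l t x \<noteq> 0" using char_nonzero by blast
  show "continuous (at x within {s. 0 \<le> Re s}) kernel"
  proof (cases "x\<^sup>2 + (of_real l)\<^sup>2 = 0")
    case False
    thus ?thesis using kernel_isCont \<open>delay_char l t x \<noteq> 0\<close> continuous_at_imp_continuous_at_within
      by blast
  qed (rule kernel_continuous_at_pole)
qed

lemma remainder_eq:
  assumes "s\<^sup>2 + (of_real l)\<^sup>2 \<noteq> 0" "delay_char l t s \<noteq> 0" "s + of_real l \<noteq> 0"
  shows "remainder s = of_real (pole_coeff * l) * (s - of_real l) / ((s\<^sup>2 + (of_real l)\<^sup>2) * (s + of_real l))
              - (s - of_real l * exp (- of_real t * s)) / (2 * (s\<^sup>2 + (of_real l)\<^sup>2) * delay_char l t s)"
proof -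
  have "(a * s * A - (s - L * E) / 2) / (D * A) - a / (s + L)
      = a * L * (s - L) / (D * (s + L)) - (s - L * E) / (2 * D * A)"
    if "D = s\<^sup>2 + L\<^sup>2" "D \<noteq> 0" "A \<noteq> 0" "s + L \<noteq> 0" for a L A E D :: complex
  proof -
    have "(a * s * A - (s - L * E) / 2) / (D * A) = a * s / D - (s - L * E) / (2 * D * A)"
      using that(2,3) by (simp add: field_simps)
    moreover have "a * s / D - a / (s + L) = a * (s * (s + L) - D) / (D * (s + L))"
      using that(2,4) by (simp add: field_simps)
    moreover have "s * (s + L) - D = L * (s - L)"
      using that(1) by (simp add: power2_eq_square algebra_simps)
    ultimately show ?thesis by (simp add: mult.assoc diff_diff_eq add.commute diff_add_eq)
  qed
  from this[of "s\<^sup>2 + (of_real l)\<^sup>2" "of_real l" "delay_char l t s" "of_real pole_coeff"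
      "exp (- of_real t * s)"]
  show ?thesis using assms by (simp add: remainder_def kernel_def numer_def)
qed

lemma large_circle_norm_bounds:
  assumes r: "2 * l \<le> r" and s: "cmod s = r" "0 \<le> Re s"
  shows "cmod (s - of_real l * exp (- of_real t * s)) \<le> 3 * r / 2"
    and "r / 2 \<le> cmod (delay_char l t s)"
    and "cmod (s - of_real l) \<le> 3 * r / 2"
    and "r / 2 \<le> cmod (s + of_real l)"
    and "3 * r\<^sup>2 / 4 \<le> cmod (s\<^sup>2 + (of_real l)\<^sup>2)"
proof -
  have "cmod (of_real l * exp (- of_real t * s)) \<le> l"
    using t_nonneg s l_pos by (simp add: norm_mult mult_left_le mult_nonneg_nonneg)
  thus "cmod (s - of_real l * exp (- of_real t * s)) \<le> 3 * r / 2"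
    and "r / 2 \<le> cmod (delay_char l t s)"
    using norm_triangle_ineq4[of s "of_real l * exp (- of_real t * s)"]
      norm_triangle_ineq2[of s "- (of_real l * exp (- of_real t * s))"] s r
    by (auto simp: delay_char_def)
  show "cmod (s - of_real l) \<le> 3 * r / 2"
    using norm_triangle_ineq4[of s "of_real l"] s r l_pos by simp
  show "r / 2 \<le> cmod (s + of_real l)"
    using norm_triangle_ineq2[of s "- of_real l"] s r l_pos by simp
  have "cmod (s\<^sup>2) \<le> cmod (s\<^sup>2 + (of_real l)\<^sup>2) + l\<^sup>2"
    using norm_triangle_ineq4[of "s\<^sup>2 + (of_real l)\<^sup>2" "(of_real l)\<^sup>2"] by (simp add: norm_power)
  moreover have "l\<^sup>2 \<le> (r / 2)\<^sup>2" using r l_pos by (intro power_mono) auto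
  ultimately show "3 * r\<^sup>2 / 4 \<le> cmod (s\<^sup>2 + (of_real l)\<^sup>2)"
    using s by (simp add: norm_power power_divide)
qed

lemma remainder_bound:
  assumes r: "2 * l \<le> r" and s: "cmod s = r" "0 \<le> Re s"
  shows "cmod (remainder s) \<le> (4 * \<bar>pole_coeff\<bar> * l + 2) / r\<^sup>2"
proof -
  have r_pos: "0 < r" using r l_pos by linarith
  note n_delay = large_circle_norm_bounds(1)[OF assms] and n_char = large_circle_norm_bounds(2)[OF assms]
    and n_diff = large_circle_norm_bounds(3)[OF assms] and n_sum = large_circle_norm_bounds(4)[OF assms]
    and n_sq = large_circle_norm_bounds(5)[OF assms]
  have "cmod (of_real (pole_coeff * l) * (s - of_real l) / ((s\<^sup>2 + (of_real l)\<^sup>2) * (s + of_real l)))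
        \<le> (\<bar>pole_coeff\<bar> * l * (3 * r / 2)) / ((3 * r\<^sup>2 / 4) * (r / 2))"
    unfolding norm_divide norm_mult norm_of_real
  proof (rule frac_le)
    show "\<bar>pole_coeff * l\<bar> * cmod (s - of_real l) \<le> \<bar>pole_coeff\<bar> * l * (3 * r / 2)"
      using l_pos mult_left_mono[OF n_diff, of "\<bar>pole_coeff\<bar> * l"] by (simp add: abs_mult)
    show "3 * r\<^sup>2 / 4 * (r / 2) \<le> cmod (s\<^sup>2 + (of_real l)\<^sup>2) * cmod (s + of_real l)"
      using n_sq n_sum r_pos by (intro mult_mono) auto
  qed (use l_pos r_pos in auto)
  moreover have "cmod ((s - of_real l * exp (- of_real t * s)) / (2 * (s\<^sup>2 + (of_real l)\<^sup>2) * delay_char l t s))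
        \<le> (3 * r / 2) / (2 * (3 * r\<^sup>2 / 4) * (r / 2))"
    unfolding norm_divide norm_mult
  proof (rule frac_le)
    show "2 * (3 * r\<^sup>2 / 4) * (r / 2) \<le> cmod 2 * cmod (s\<^sup>2 + (of_real l)\<^sup>2) * cmod (delay_char l t s)"
      using n_sq n_char r_pos by (intro mult_mono) auto
  qed (use n_delay r_pos in auto)
  moreover have "s\<^sup>2 + (of_real l)\<^sup>2 \<noteq> 0" "delay_char l t s \<noteq> 0" "s + of_real l \<noteq> 0"
    using n_sq n_char n_sum r_pos by auto
  ultimately have "cmod (remainder s) \<le> (\<bar>pole_coeff\<bar> * l * (3 * r / 2)) / ((3 * r\<^sup>2 / 4) * (r / 2))
      + (3 * r / 2) / (2 * (3 * r\<^sup>2 / 4) * (r / 2))"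
    using remainder_eq norm_triangle_ineq4 by (smt (verit))
  also have "\<dots> = (4 * \<bar>pole_coeff\<bar> * l + 2) / r\<^sup>2"
    using r_pos by (simp add: field_simps power2_eq_square)
  finally show ?thesis .
qed

lemma remainder_continuous: "continuous_on {s. 0 \<le> Re s} remainder"
  unfolding remainder_def[abs_def]
  by (intro continuous_intros kernel_continuous) (use l_pos in \<open>auto simp: complex_eq_iff\<close>)

lemma remainder_holomorphic: "remainder holomorphic_on {s. 0 < Re s}"
  unfolding remainder_def[abs_def]
  by (intro holomorphic_intros kernel_holomorphic) (use l_pos in \<open>auto simp: complex_eq_iff\<close>)

lemma sq_gain_eq_remainder:
  assumes "\<omega>\<^sup>2 \<noteq> l\<^sup>2"
  shows "sq_gain l t \<omega> = 2 * Re (remainder (Complex 0 \<omega>)) + 2 * pole_coeff * (l / (\<omega>\<^sup>2 + l\<^sup>2))"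
proof -
  have "Complex 0 \<omega> = \<i> * of_real \<omega>" by (simp add: complex_eq_iff)
  moreover have "Re (of_real pole_coeff / (\<i> * of_real \<omega> + of_real l)) = pole_coeff * (l / (\<omega>\<^sup>2 + l\<^sup>2))"
    by (simp add: Re_divide power2_eq_square)
  ultimately show ?thesis using kernel_imag_axis[OF assms] by (simp add: remainder_def)
qed

lemma sq_gain_interval_integral:
  assumes r: "2 * l \<le> r"
  obtains I where "(sq_gain l t has_integral 2 * I + 4 * pole_coeff * arctan (r / l)) {-r..r}"
    and "\<bar>I\<bar> \<le> (4 * \<bar>pole_coeff\<bar> * l + 2) * pi / r"
proof -
  have r_pos: "0 < r" using r l_pos by linarith
  obtain J where J: "((\<lambda>y. remainder (Complex 0 y)) has_integral J) {-r..r}"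
      and J_le: "cmod J \<le> pi * r * ((4 * \<bar>pole_coeff\<bar> * l + 2) / r\<^sup>2)"
    using imaginary_axis_integral_bound[OF remainder_continuous remainder_holomorphic r_pos
      remainder_bound[OF r]] by blast
  have "((\<lambda>y. Re (remainder (Complex 0 y))) has_integral Re J) {-r..r}"
    using has_integral_linear[OF J bounded_linear_Re] by (simp add: o_def)
  hence "((\<lambda>\<omega>. 2 * Re (remainder (Complex 0 \<omega>)) + 2 * pole_coeff * (l / (\<omega>\<^sup>2 + l\<^sup>2))) has_integral
          2 * Re J + 2 * pole_coeff * (2 * arctan (r / l))) {-r..r}"
    using r_pos l_pos by (intro has_integral_add has_integral_mult_right lorentzian_has_integral) auto
  moreover have "2 * pole_coeff * (2 * a) = 4 * pole_coeff * a" for a :: real by simp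
  ultimately have "((\<lambda>\<omega>. 2 * Re (remainder (Complex 0 \<omega>)) + 2 * pole_coeff * (l / (\<omega>\<^sup>2 + l\<^sup>2)))
      has_integral 2 * Re J + 4 * pole_coeff * arctan (r / l)) {-r..r}"
    by metis
  hence integral: "(sq_gain l t has_integral 2 * Re J + 4 * pole_coeff * arctan (r / l)) {-r..r}"
  proof (rule has_integral_spike_finite[of "{l, -l}", rotated 2])
    fix x assume "x \<in> {-r..r} - {l, -l}"
    hence "x\<^sup>2 \<noteq> l\<^sup>2" by (auto simp: power2_eq_iff)
    thus "sq_gain l t x = 2 * Re (remainder (Complex 0 x)) + 2 * pole_coeff * (l / (x\<^sup>2 + l\<^sup>2))"
      by (rule sq_gain_eq_remainder)
  qed simp
  have "pi * r * ((4 * \<bar>pole_coeff\<bar> * l + 2) / r\<^sup>2) = (4 * \<bar>pole_coeff\<bar> * l + 2) * pi / r"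
    using r_pos by (simp add: field_simps power2_eq_square)
  hence "\<bar>Re J\<bar> \<le> (4 * \<bar>pole_coeff\<bar> * l + 2) * pi / r"
    using abs_Re_le_cmod[of J] J_le by linarith
  with integral show thesis by (rule that)
qed

lemma sq_gain_has_integral_pole_coeff: "(sq_gain l t has_integral 2 * pi * pole_coeff) UNIV"
proof (rule nonneg_has_integral_UNIV_of_intervals)
  show "continuous_on UNIV (sq_gain l t)"
    using sq_gain_continuous l_pos t_nonneg lt_less by blast
  define C where "C = (4 * \<bar>pole_coeff\<bar> * l + 2) * pi"
  have large: "eventually (\<lambda>k. 2 * l \<le> real k) sequentially"
    using filterlim_real_sequentially unfolding filterlim_at_top by blast
  define J where "J k = (SOME I. (sq_gain l t has_integral 2 * I + 4 * pole_coeff * arctan (real k / l))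
      {-real k..real k} \<and> \<bar>I\<bar> \<le> C / real k)" for k :: nat
  have J: "(sq_gain l t has_integral 2 * J k + 4 * pole_coeff * arctan (real k / l)) {-real k..real k}
      \<and> \<bar>J k\<bar> \<le> C / real k" if "2 * l \<le> real k" for k
    unfolding J_def C_def
    by (rule someI_ex) (use sq_gain_interval_integral[OF that] in \<open>auto simp: mult.assoc\<close>)
  have "J \<longlonglongrightarrow> 0"
  proof (rule Lim_null_comparison)
    show "eventually (\<lambda>k. norm (J k) \<le> C / real k) sequentially"
      using large by eventually_elim (use J in auto)
  qed (rule lim_const_over_n)
  moreover have "(\<lambda>k. arctan (real k / l)) \<longlonglongrightarrow> pi / 2"
  proof -
    have "filterlim (\<lambda>k. (1 / l) * real k) at_top sequentially"
      using l_pos by (intro filterlim_tendsto_pos_mult_at_top[OF tendsto_const] filterlim_real_sequentially) auto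
    thus ?thesis by (simp add: filterlim_compose[OF tendsto_arctan_at_top])
  qed
  ultimately have "(\<lambda>k. 2 * J k + 4 * pole_coeff * arctan (real k / l)) \<longlonglongrightarrow> 2 * pi * pole_coeff"
    using tendsto_add[OF tendsto_mult_left[of J 0 _ 2] tendsto_mult_left[of _ "pi / 2" _ "4 * pole_coeff"]]
    by (simp add: mult.assoc)
  moreover have "eventually (\<lambda>k. 2 * J k + 4 * pole_coeff * arctan (real k / l)
      = integral {-real k..real k} (sq_gain l t)) sequentially"
    using large by eventually_elim (use J integral_unique in metis)
  ultimately show "(\<lambda>k. integral {-real k..real k} (sq_gain l t)) \<longlonglongrightarrow> 2 * pi * pole_coeff"
    by (rule Lim_transform_eventually)
qed (simp add: sq_gain_def)

end

lemma sq_gain_has_integral: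
  assumes "0 < l" "0 \<le> t" "l * t < pi / 2"
  shows "(sq_gain l t has_integral pi * cos (l * t) / (l * (1 - sin (l * t)))) UNIV"
proof -
  interpret delay_gain l t using assms by unfold_locales
  have "2 * pi * pole_coeff = pi * cos (l * t) / (l * (1 - sin (l * t)))"
    using sin_lt_one l_pos by (simp add: pole_coeff_def field_simps)
  thus ?thesis using sq_gain_has_integral_pole_coeff by simp
qed

section \<open>Spectral theorem for real symmetric matrices\<close>

lemma inner_mult_vec_symmetric:
  fixes A :: "real^'n^'n"
  assumes "transpose A = A"
  shows "x \<bullet> (A *v y) = (A *v x) \<bullet> y"
proof -
  have "x \<bullet> (A *v y) = (x v* A) \<bullet> y" by (simp add: dot_lmul_matrix)
  also have "x v* A = transpose A *v x" by simp
  finally show ?thesis using assms by simp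
qed

lemma linear_term_zero_of_quadratic_nonpos:
  fixes d q :: real
  assumes "\<And>e. 2 * e * d + e\<^sup>2 * q \<le> 0"
  shows "d = 0"
proof -
  define p where "p = \<bar>q\<bar> + 1"
  have "p > 0" by (simp add: p_def)
  have "2 * (d / p) * d + (d / p)\<^sup>2 * q = d * d * (2 * p + q) / p\<^sup>2"
    using \<open>p > 0\<close> by (simp add: field_simps power2_eq_square)
  hence "d * d * (2 * p + q) / p\<^sup>2 \<le> 0" using assms[of "d / p"] by simp
  hence "d * d * (2 * p + q) \<le> 0" using \<open>p > 0\<close> by (simp add: divide_le_0_iff)
  moreover have "2 * p + q > 0" by (simp add: p_def)
  ultimately have "d * d \<le> 0" by (simp add: mult_le_0_iff)
  thus ?thesis by (metis mult_eq_0_iff order_antisym_conv zero_le_square)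
qed

text \<open>Perturbing the maximiser \<open>v\<close> along \<open>u \<in> S\<close> shows that \<open>A v - \<mu> v\<close> is orthogonal to \<open>S\<close>.\<close>

lemma rayleigh_maximiser_eigenvector:
  fixes A :: "real^'n^'n"
  assumes sym: "transpose A = A" and S: "subspace S" and inv: "\<And>x. x \<in> S \<Longrightarrow> A *v x \<in> S"
    and v: "v \<in> S" "v \<bullet> v = 1"
    and max: "\<And>w. w \<in> S \<Longrightarrow> w \<bullet> (A *v w) \<le> (v \<bullet> (A *v v)) * (w \<bullet> w)"
  shows "A *v v = (v \<bullet> (A *v v)) *\<^sub>R v"
proof -
  define \<mu> where "\<mu> = v \<bullet> (A *v v)"
  have orth: "u \<bullet> (A *v v) - \<mu> * (u \<bullet> v) = 0" if u: "u \<in> S" for u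
  proof (rule linear_term_zero_of_quadratic_nonpos)
    fix e :: real
    have "v + e *\<^sub>R u \<in> S" using v u S by (simp add: subspace_add subspace_scale)
    from max[OF this]
    have "(v + e *\<^sub>R u) \<bullet> (A *v (v + e *\<^sub>R u)) \<le> \<mu> * ((v + e *\<^sub>R u) \<bullet> (v + e *\<^sub>R u))"
      by (simp add: \<mu>_def)
    moreover have "v \<bullet> (A *v u) = u \<bullet> (A *v v)"
      using inner_mult_vec_symmetric[OF sym, of v u] by (simp add: inner_commute)
    ultimately show "2 * e * (u \<bullet> (A *v v) - \<mu> * (u \<bullet> v)) + e\<^sup>2 * (u \<bullet> (A *v u) - \<mu> * (u \<bullet> u)) \<le> 0"
      by (simp add: \<mu>_def[symmetric] matrix_vector_right_distrib matrix_vector_mult_scaleR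
            inner_add_left inner_add_right v(2) inner_commute[of v u] algebra_simps power2_eq_square)
  qed
  define u where "u = A *v v - \<mu> *\<^sub>R v"
  have "u \<in> S" unfolding u_def using inv[OF v(1)] v(1) S by (simp add: subspace_diff subspace_scale)
  hence "u \<bullet> u = 0" using orth by (simp add: u_def inner_diff_right)
  thus ?thesis by (simp add: u_def \<mu>_def)
qed

lemma symmetric_invariant_subspace_eigenvector:
  fixes A :: "real^'n^'n"
  assumes sym: "transpose A = A" and S: "subspace S" and inv: "\<And>x. x \<in> S \<Longrightarrow> A *v x \<in> S"
    and ne: "\<exists>x\<in>S. x \<noteq> 0"
  shows "\<exists>v\<in>S. v \<bullet> v = 1 \<and> A *v v = (v \<bullet> (A *v v)) *\<^sub>R v"
proof -
  define K where "K = S \<inter> sphere 0 1"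
  have "compact K" unfolding K_def
    by (intro closed_Int_compact closed_subspace S compact_sphere)
  have normalize: "(1 / norm x) *\<^sub>R x \<in> K" if "x \<in> S" "x \<noteq> 0" for x
    using that S by (auto simp: K_def subspace_scale)
  hence "K \<noteq> {}" using ne by blast
  have "continuous_on K (\<lambda>x. x \<bullet> (A *v x))" by (intro continuous_intros)
  then obtain v where v: "v \<in> K" and v_max: "\<And>y. y \<in> K \<Longrightarrow> y \<bullet> (A *v y) \<le> v \<bullet> (A *v v)"
    using continuous_attains_sup[OF \<open>compact K\<close> \<open>K \<noteq> {}\<close>] by blast
  have "v \<in> S" "v \<bullet> v = 1" using v by (auto simp: K_def norm_eq_1)
  moreover have "w \<bullet> (A *v w) \<le> (v \<bullet> (A *v v)) * (w \<bullet> w)" if w: "w \<in> S" for w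
  proof (cases "w = 0")
    case False
    have "((1 / norm w) *\<^sub>R w) \<bullet> (A *v ((1 / norm w) *\<^sub>R w)) = (w \<bullet> (A *v w)) / (norm w)\<^sup>2"
      by (simp add: matrix_vector_mult_scaleR power2_eq_square)
    hence "(w \<bullet> (A *v w)) / (norm w)\<^sup>2 \<le> v \<bullet> (A *v v)" using v_max[OF normalize[OF w False]] by simp
    thus ?thesis using False by (simp add: divide_le_eq power2_norm_eq_inner)
  qed simp
  ultimately show ?thesis using rayleigh_maximiser_eigenvector[OF sym S inv] by blast
qed

lemma symmetric_eigenvector_orthogonal:
  fixes A :: "real^'n^'n"
  assumes "transpose A = A" "A *v v = c *\<^sub>R v" "v \<bullet> x = 0"
  shows "v \<bullet> (A *v x) = 0"
proof -
  have "v \<bullet> (A *v x) = (A *v v) \<bullet> x" by (rule inner_mult_vec_symmetric[OF assms(1)])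
  thus ?thesis using assms(2,3) by simp
qed

lemma dim_orthogonal_slice_less:
  fixes v :: "'a::euclidean_space"
  assumes S: "subspace S" and v: "v \<in> S" "v \<noteq> 0"
  shows "dim (S \<inter> {x. v \<bullet> x = 0}) < dim S"
proof -
  have "subspace (S \<inter> {x. v \<bullet> x = 0})" by (intro subspace_inter S subspace_hyperplane)
  hence "span (S \<inter> {x. v \<bullet> x = 0}) = S \<inter> {x. v \<bullet> x = 0}" by (rule span_eq_iff[THEN iffD2])
  moreover have "span S = S" by (rule span_eq_iff[THEN iffD2, OF S])
  moreover have "v \<notin> S \<inter> {x. v \<bullet> x = 0}" using v(2) by simp
  hence "S \<inter> {x. v \<bullet> x = 0} \<subset> S" using v(1) by blast
  ultimately show ?thesis using dim_psubset[of "S \<inter> {x. v \<bullet> x = 0}" S] by argo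
qed

lemma expansion_insert_orthogonal:
  fixes v x :: "'a::real_inner"
  assumes "finite B" "v \<notin> B" "\<And>b. b \<in> B \<Longrightarrow> b \<bullet> v = 0"
    and expansion: "x - (v \<bullet> x) *\<^sub>R v = (\<Sum>b\<in>B. (b \<bullet> (x - (v \<bullet> x) *\<^sub>R v)) *\<^sub>R b)"
  shows "x = (\<Sum>b\<in>insert v B. (b \<bullet> x) *\<^sub>R b)"
proof -
  have "(\<Sum>b\<in>B. (b \<bullet> (x - (v \<bullet> x) *\<^sub>R v)) *\<^sub>R b) = (\<Sum>b\<in>B. (b \<bullet> x) *\<^sub>R b)"
    by (intro sum.cong refl) (simp add: inner_diff_right assms(3))
  with expansion have "x - (v \<bullet> x) *\<^sub>R v = (\<Sum>b\<in>B. (b \<bullet> x) *\<^sub>R b)" by (rule trans)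
  hence "x = (\<Sum>b\<in>B. (b \<bullet> x) *\<^sub>R b) + (v \<bullet> x) *\<^sub>R v" by (rule diff_eq_eq[THEN iffD1])
  also have "\<dots> = (\<Sum>b\<in>insert v B. (b \<bullet> x) *\<^sub>R b)" using assms(1,2) by (simp add: add.commute)
  finally show ?thesis .
qed

lemma symmetric_invariant_subspace_eigenbasis:
  fixes A :: "real^'n^'n"
  assumes sym: "transpose A = A"
  shows "subspace S \<Longrightarrow> (\<And>x. x \<in> S \<Longrightarrow> A *v x \<in> S) \<Longrightarrow>
    \<exists>B. B \<subseteq> S \<and> finite B \<and> (\<forall>b\<in>B. b \<bullet> b = 1) \<and> (\<forall>b\<in>B. \<forall>b'\<in>B. b \<noteq> b' \<longrightarrow> b \<bullet> b' = 0) \<and>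
        (\<forall>b\<in>B. A *v b = (b \<bullet> (A *v b)) *\<^sub>R b) \<and> (\<forall>x\<in>S. x = (\<Sum>b\<in>B. (b \<bullet> x) *\<^sub>R b))"
proof (induction "dim S" arbitrary: S rule: less_induct)
  case less
  show ?case
  proof (cases "\<exists>x\<in>S. x \<noteq> 0")
    case False
    thus ?thesis by (intro exI[of _ "{}"]) auto
  next
    case True
    obtain v where v: "v \<in> S" "v \<bullet> v = 1" "A *v v = (v \<bullet> (A *v v)) *\<^sub>R v"
      using symmetric_invariant_subspace_eigenvector[OF sym less.prems True] by blast
    define S' where "S' = S \<inter> {x. v \<bullet> x = 0}"
    have sub': "subspace S'" unfolding S'_def by (intro subspace_inter less.prems(1) subspace_hyperplane)
    have inv': "A *v x \<in> S'" if "x \<in> S'" for x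
      using that less.prems(2) symmetric_eigenvector_orthogonal[OF sym v(3)] by (simp add: S'_def)
    have "v \<noteq> 0" using v(2) by auto
    hence "dim S' < dim S" unfolding S'_def by (rule dim_orthogonal_slice_less[OF less.prems(1) v(1)])
    then obtain B' where B': "B' \<subseteq> S'" "finite B'" "\<forall>b\<in>B'. b \<bullet> b = 1"
        "\<forall>b\<in>B'. \<forall>b'\<in>B'. b \<noteq> b' \<longrightarrow> b \<bullet> b' = 0" "\<forall>b\<in>B'. A *v b = (b \<bullet> (A *v b)) *\<^sub>R b"
        "\<forall>x\<in>S'. x = (\<Sum>b\<in>B'. (b \<bullet> x) *\<^sub>R b)"
      using less.hyps[OF _ sub' inv'] by blast
    have "v \<notin> B'" using B'(1) v(2) by (auto simp: S'_def)
    have orth_v: "b \<bullet> v = 0" if "b \<in> B'" for b using B'(1) that by (auto simp: S'_def inner_commute)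
    show ?thesis
    proof (intro exI[of _ "insert v B'"] conjI ballI impI)
      show "insert v B' \<subseteq> S" using B'(1) v(1) by (auto simp: S'_def)
      show "finite (insert v B')" using B'(2) by simp
      show "b \<bullet> b = 1" if "b \<in> insert v B'" for b using that B'(3) v(2) by auto
      show "b \<bullet> b' = 0" if "b \<in> insert v B'" "b' \<in> insert v B'" "b \<noteq> b'" for b b'
        using that B'(4) orth_v by (auto simp: inner_commute)
      show "A *v b = (b \<bullet> (A *v b)) *\<^sub>R b" if "b \<in> insert v B'" for b using that B'(5) v(3) by auto
      fix x assume "x \<in> S"
      hence "x - (v \<bullet> x) *\<^sub>R v \<in> S'" using v less.prems(1)
        by (auto simp: S'_def subspace_diff subspace_scale inner_diff_right)
      hence "x - (v \<bullet> x) *\<^sub>R v = (\<Sum>b\<in>B'. (b \<bullet> (x - (v \<bullet> x) *\<^sub>R v)) *\<^sub>R b)"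
        by (rule B'(6)[rule_format])
      with B'(2) \<open>v \<notin> B'\<close> orth_v show "x = (\<Sum>b\<in>insert v B'. (b \<bullet> x) *\<^sub>R b)"
        by (rule expansion_insert_orthogonal)
    qed
  qed
qed

locale orthonormal_basis =
  fixes B :: "(real^'n::finite) set"
  assumes finite_basis: "finite B"
    and basis_norm: "\<And>b. b \<in> B \<Longrightarrow> b \<bullet> b = 1"
    and basis_orth: "\<And>b b'. b \<in> B \<Longrightarrow> b' \<in> B \<Longrightarrow> b \<noteq> b' \<Longrightarrow> b \<bullet> b' = 0"
    and basis_expansion: "\<And>x. x = (\<Sum>b\<in>B. (b \<bullet> x) *\<^sub>R b)"

lemma symmetric_orthonormal_eigenbasis:
  fixes A :: "real^'n^'n"
  assumes "transpose A = A"
  obtains B where "orthonormal_basis B" and "\<And>b. b \<in> B \<Longrightarrow> A *v b = (b \<bullet> (A *v b)) *\<^sub>R b"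
proof -
  have "\<exists>B. finite B \<and> (\<forall>b\<in>B. b \<bullet> b = 1) \<and> (\<forall>b\<in>B. \<forall>b'\<in>B. b \<noteq> b' \<longrightarrow> b \<bullet> b' = 0) \<and>
      (\<forall>b\<in>B. A *v b = (b \<bullet> (A *v b)) *\<^sub>R b) \<and> (\<forall>x. x = (\<Sum>b\<in>B. (b \<bullet> x) *\<^sub>R b))"
    using symmetric_invariant_subspace_eigenbasis[OF assms subspace_UNIV] by auto
  then obtain B where B: "finite B" "\<forall>b\<in>B. b \<bullet> b = 1" "\<forall>b\<in>B. \<forall>b'\<in>B. b \<noteq> b' \<longrightarrow> b \<bullet> b' = 0"
      "\<forall>b\<in>B. A *v b = (b \<bullet> (A *v b)) *\<^sub>R b" "\<forall>x. x = (\<Sum>b\<in>B. (b \<bullet> x) *\<^sub>R b)"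
    by blast
  have "orthonormal_basis B"
  proof
    show "finite B" by (rule B(1))
    show "\<And>b. b \<in> B \<Longrightarrow> b \<bullet> b = 1" using B(2) by blast
    show "\<And>b b'. b \<in> B \<Longrightarrow> b' \<in> B \<Longrightarrow> b \<noteq> b' \<Longrightarrow> b \<bullet> b' = 0" using B(3) by blast
    show "\<And>x. x = (\<Sum>b\<in>B. (b \<bullet> x) *\<^sub>R b)" using B(5) by blast
  qed
  thus thesis using that B(4) by blast
qed

section \<open>Matrix functions in an orthonormal eigenbasis\<close>

lemma pinv_eqI:
  fixes X :: "real^'m::finite^'n::finite" and Y :: "real^'n^'m"
  assumes a1: "X ** Y ** X = X" and a2: "Y ** X ** Y = Y"
    and a3: "transpose (X ** Y) = X ** Y" and a4: "transpose (Y ** X) = Y ** X"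
  shows "pinv X = Y"
  unfolding pinv_def
proof (rule the_equality)
  show "X ** Y ** X = X \<and> Y ** X ** Y = Y \<and> transpose (X ** Y) = X ** Y \<and> transpose (Y ** X) = Y ** X"
    using assms by blast
  fix Z assume "X ** Z ** X = X \<and> Z ** X ** Z = Z \<and> transpose (X ** Z) = X ** Z \<and> transpose (Z ** X) = Z ** X"
  hence z1: "X ** Z ** X = X" and z2: "Z ** X ** Z = Z" and z3: "transpose (X ** Z) = X ** Z"
    and z4: "transpose (Z ** X) = Z ** X" by auto
  have tX1: "transpose X = transpose X ** (X ** Y)"
  proof -
    have "transpose X = transpose (X ** Y ** X)" using a1 by simp
    also have "\<dots> = transpose X ** transpose (X ** Y)" by (simp only: matrix_transpose_mul)
    finally show ?thesis using a3 by simp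
  qed
  have tX2: "transpose X = (Z ** X) ** transpose X"
  proof -
    have "transpose X = transpose (X ** (Z ** X))" using z1 by (simp add: matrix_mul_assoc)
    also have "\<dots> = transpose (Z ** X) ** transpose X" by (simp only: matrix_transpose_mul)
    finally show ?thesis using z4 by simp
  qed
  have "Z = Z ** (X ** Z)" using z2 by (simp add: matrix_mul_assoc)
  also have "\<dots> = Z ** transpose (X ** Z)" using z3 by simp
  also have "\<dots> = Z ** (transpose Z ** transpose X)" by (simp only: matrix_transpose_mul)
  also have "\<dots> = Z ** (transpose Z ** (transpose X ** (X ** Y)))" using tX1 by simp
  also have "\<dots> = Z ** (transpose (X ** Z) ** (X ** Y))" by (simp add: matrix_transpose_mul matrix_mul_assoc)
  also have "\<dots> = (Z ** X ** Z) ** X ** Y" using z3 by (simp add: matrix_mul_assoc)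
  also have "\<dots> = Z ** X ** Y" using z2 by simp
  finally have zz: "Z = Z ** X ** Y" .
  have "Y = (Y ** X) ** Y" using a2 by simp
  also have "\<dots> = transpose (Y ** X) ** Y" using a4 by simp
  also have "\<dots> = transpose X ** transpose Y ** Y" by (simp only: matrix_transpose_mul)
  also have "\<dots> = (Z ** X) ** transpose X ** transpose Y ** Y" using tX2 by simp
  also have "\<dots> = (Z ** X) ** transpose (Y ** X) ** Y" by (simp add: matrix_transpose_mul matrix_mul_assoc)
  also have "\<dots> = Z ** X ** (Y ** X ** Y)" using a4 by (simp add: matrix_mul_assoc)
  also have "\<dots> = Z ** X ** Y" using a2 by simp
  finally show "Z = Y" using zz by simp
qed

lemma matrix_inv_eqI:
  fixes A :: "'a::semiring_1^'n^'n"
  assumes AY: "A ** Y = mat 1" and YA: "Y ** A = mat 1"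
  shows "matrix_inv A = Y"
proof -
  have "A ** matrix_inv A = mat 1 \<and> matrix_inv A ** A = mat 1"
    unfolding matrix_inv_def by (rule someI[of _ Y]) (use assms in simp)
  hence "matrix_inv A ** A = mat 1" by blast
  have "matrix_inv A = matrix_inv A ** (A ** Y)" using AY by simp
  also have "\<dots> = (matrix_inv A ** A) ** Y" by (simp add: matrix_mul_assoc)
  finally show ?thesis using \<open>matrix_inv A ** A = mat 1\<close> by simp
qed

context orthonormal_basis
begin

lemma sum_basis_outer: "(\<Sum>b\<in>B. b$i * b$j) = (if i = j then 1 else 0)"
proof -
  have "axis j (1::real) $ i = (\<Sum>b\<in>B. (b \<bullet> axis j 1) *\<^sub>R b) $ i" using basis_expansion by metis
  moreover have "b \<bullet> axis j 1 = b $ j" for b :: "real^'n" by (simp add: inner_axis)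
  moreover have "axis j (1::real) $ i = (if i = j then 1 else 0)" by (simp add: axis_def)
  ultimately show ?thesis by (simp add: mult.commute)
qed

lemma basis_inner_delta: "b \<in> B \<Longrightarrow> b' \<in> B \<Longrightarrow> (\<Sum>i\<in>UNIV. b$i * b'$i) = (if b = b' then 1 else 0)"
  using basis_norm basis_orth by (auto simp: inner_vec_def)

definition spectral_mat :: "(real^'n \<Rightarrow> 'a::real_field) \<Rightarrow> 'a^'n^'n" where
  "spectral_mat f = (\<chi> i j. \<Sum>b\<in>B. f b * of_real (b$i * b$j))"

lemma spectral_mat_nth: "spectral_mat f $ i $ j = (\<Sum>b\<in>B. f b * of_real (b$i * b$j))"
  by (simp add: spectral_mat_def)

lemma spectral_mat_mult: "spectral_mat f ** spectral_mat g = spectral_mat (\<lambda>b. f b * g b)"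
proof -
  have "(\<Sum>k\<in>UNIV. (\<Sum>b\<in>B. f b * of_real (b$i * b$k)) * (\<Sum>b'\<in>B. g b' * of_real (b'$k * b'$j)))
      = (\<Sum>b\<in>B. f b * g b * of_real (b$i * b$j))" for i j
  proof -
    have "(\<Sum>k\<in>UNIV. (\<Sum>b\<in>B. f b * of_real (b$i * b$k)) * (\<Sum>b'\<in>B. g b' * of_real (b'$k * b'$j)))
        = (\<Sum>k\<in>UNIV. \<Sum>b\<in>B. \<Sum>b'\<in>B. f b * g b' * of_real (b$i * b'$j) * of_real (b$k * b'$k))"
      unfolding sum_product by (intro sum.cong refl) (simp add: algebra_simps)
    also have "\<dots> = (\<Sum>b\<in>B. \<Sum>b'\<in>B. f b * g b' * of_real (b$i * b'$j) * of_real (\<Sum>k\<in>UNIV. b$k * b'$k))"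
      by (simp add: sum.swap[of _ UNIV] sum_distrib_left)
    also have "\<dots> = (\<Sum>b\<in>B. \<Sum>b'\<in>B. if b = b' then f b * g b' * of_real (b$i * b'$j) else 0)"
      by (intro sum.cong refl) (simp add: basis_inner_delta)
    also have "\<dots> = (\<Sum>b\<in>B. f b * g b * of_real (b$i * b$j))"
      using finite_basis by (simp add: sum.delta)
    finally show ?thesis .
  qed
  thus ?thesis by (simp add: spectral_mat_def matrix_matrix_mult_def vec_eq_iff)
qed

lemma spectral_mat_const: "spectral_mat (\<lambda>b. c) = mat c"
proof -
  have "(\<Sum>b\<in>B. c * of_real (b$i * b$j)) = (if i = j then c else 0)" for i j
  proof -
    have "(\<Sum>b\<in>B. c * of_real (b$i * b$j)) = c * of_real (\<Sum>b\<in>B. b$i * b$j)"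
      by (simp only: of_real_sum sum_distrib_left)
    thus ?thesis using sum_basis_outer[of i j] by simp
  qed
  thus ?thesis by (simp add: spectral_mat_def mat_def vec_eq_iff)
qed

lemma spectral_mat_one: "spectral_mat (\<lambda>b. 1) = mat 1" by (rule spectral_mat_const)

lemma spectral_mat_add: "spectral_mat f + spectral_mat g = spectral_mat (\<lambda>b. f b + g b)"
  by (simp add: spectral_mat_def vec_eq_iff sum.distrib algebra_simps)

lemma spectral_mat_diff: "spectral_mat f - spectral_mat g = spectral_mat (\<lambda>b. f b - g b)"
  by (simp add: spectral_mat_def vec_eq_iff sum_subtractf algebra_simps)

lemma transpose_spectral_mat: "transpose (spectral_mat f) = spectral_mat f"
  by (simp add: spectral_mat_def transpose_def vec_eq_iff mult.commute)

lemma mat_mult_spectral_mat: "mat c ** spectral_mat f = spectral_mat (\<lambda>b. c * f b)"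
  by (simp add: spectral_mat_const[symmetric] spectral_mat_mult)

lemma scaleR_spectral_mat: "r *\<^sub>R spectral_mat f = spectral_mat (\<lambda>b. r *\<^sub>R f b)"
  by (simp add: spectral_mat_def vec_eq_iff scaleR_sum_right)

lemma spectral_mat_cong: "(\<And>b. b \<in> B \<Longrightarrow> f b = g b) \<Longrightarrow> spectral_mat f = spectral_mat g"
  by (simp add: spectral_mat_def)

lemma matrix_inv_spectral_mat:
  assumes "\<And>b. b \<in> B \<Longrightarrow> f b \<noteq> 0"
  shows "matrix_inv (spectral_mat f) = spectral_mat (\<lambda>b. inverse (f b))"
proof (rule matrix_inv_eqI)
  show "spectral_mat f ** spectral_mat (\<lambda>b. inverse (f b)) = mat 1"
    unfolding spectral_mat_mult spectral_mat_one[symmetric] by (rule spectral_mat_cong) (simp add: assms)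
  show "spectral_mat (\<lambda>b. inverse (f b)) ** spectral_mat f = mat 1"
    unfolding spectral_mat_mult spectral_mat_one[symmetric] by (rule spectral_mat_cong) (simp add: assms)
qed

lemma spectral_mat_mult_basis: "b0 \<in> B \<Longrightarrow> (spectral_mat f :: real^'n^'n) *v b0 = f b0 *\<^sub>R b0"
proof -
  assume b0: "b0 \<in> B"
  have "(\<Sum>j\<in>UNIV. (\<Sum>b\<in>B. f b * (b$i * b$j)) * b0$j) = f b0 * b0$i" for i
  proof -
    have "(\<Sum>j\<in>UNIV. (\<Sum>b\<in>B. f b * (b$i * b$j)) * b0$j) = (\<Sum>b\<in>B. f b * b$i * (\<Sum>j\<in>UNIV. b$j * b0$j))"
      by (simp add: sum_distrib_right sum_distrib_left sum.swap[of _ UNIV] algebra_simps)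
    also have "\<dots> = (\<Sum>b\<in>B. if b = b0 then f b * b$i else 0)"
      by (intro sum.cong refl) (simp add: basis_inner_delta b0)
    also have "\<dots> = f b0 * b0$i" using finite_basis b0 by (simp add: sum.delta')
    finally show ?thesis .
  qed
  thus ?thesis by (simp add: spectral_mat_def matrix_vector_mult_def vec_eq_iff)
qed

lemma matrix_eq_on_basis:
  fixes M N :: "real^'n^'n"
  assumes "\<And>b. b \<in> B \<Longrightarrow> M *v b = N *v b"
  shows "M = N"
proof -
  have "M *v x = N *v x" for x
  proof -
    have "M *v x = M *v (\<Sum>b\<in>B. (b \<bullet> x) *\<^sub>R b)" using basis_expansion by metis
    also have "\<dots> = (\<Sum>b\<in>B. (b \<bullet> x) *\<^sub>R (M *v b))"
      by (simp add: linear_sum[OF matrix_vector_mul_linear] matrix_vector_mult_scaleR o_def)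
    also have "\<dots> = (\<Sum>b\<in>B. (b \<bullet> x) *\<^sub>R (N *v b))" using assms by simp
    also have "\<dots> = N *v (\<Sum>b\<in>B. (b \<bullet> x) *\<^sub>R b)"
      by (simp add: linear_sum[OF matrix_vector_mul_linear] matrix_vector_mult_scaleR o_def)
    finally show ?thesis using basis_expansion by metis
  qed
  thus ?thesis by (simp add: matrix_eq)
qed

lemma spectral_matI:
  fixes M :: "real^'n^'n"
  assumes "\<And>b. b \<in> B \<Longrightarrow> M *v b = f b *\<^sub>R b"
  shows "M = spectral_mat f"
  by (rule matrix_eq_on_basis) (simp add: assms spectral_mat_mult_basis)

lemma mpow_spectral_mat: "mpow (spectral_mat f) k = spectral_mat (\<lambda>b. f b ^ k)"
  by (induction k) (simp_all add: spectral_mat_one spectral_mat_mult)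

definition outer_prod :: "real^'n \<Rightarrow> real^'n^'n" where "outer_prod b = (\<chi> i j. b$i * b$j)"

lemma spectral_mat_eq_sum: "(spectral_mat f :: real^'n^'n) = (\<Sum>b\<in>B. f b *\<^sub>R outer_prod b)"
  by (simp add: spectral_mat_def outer_prod_def vec_eq_iff)

lemma mat_cos_spectral_mat: "mat_cos (spectral_mat g :: real^'n^'n) = spectral_mat (\<lambda>b. cos (g b))"
proof -
  have "(\<lambda>k. ((-1) ^ k / fact (2 * k)) *\<^sub>R mpow (spectral_mat g) (2 * k)) =
        (\<lambda>k. \<Sum>b\<in>B. ((-1) ^ k / fact (2 * k) * g b ^ (2 * k)) *\<^sub>R outer_prod b)"
    unfolding mpow_spectral_mat unfolding scaleR_spectral_mat unfolding spectral_mat_eq_sum by simp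
  moreover have "(\<lambda>k. \<Sum>b\<in>B. ((-1) ^ k / fact (2 * k) * g b ^ (2 * k)) *\<^sub>R outer_prod b) sums
        (\<Sum>b\<in>B. cos (g b) *\<^sub>R outer_prod b)"
    by (intro sums_sum sums_scaleR_left cos_paired)
  ultimately have "(\<lambda>k. ((-1) ^ k / fact (2 * k)) *\<^sub>R mpow (spectral_mat g) (2 * k)) sums spectral_mat (\<lambda>b. cos (g b))"
    by (simp add: spectral_mat_eq_sum)
  thus ?thesis by (simp add: mat_cos_def sums_iff)
qed

lemma mat_sin_spectral_mat: "mat_sin (spectral_mat g :: real^'n^'n) = spectral_mat (\<lambda>b. sin (g b))"
proof -
  have "(\<lambda>k. ((-1) ^ k / fact (2 * k + 1)) *\<^sub>R mpow (spectral_mat g) (2 * k + 1)) =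
        (\<lambda>k. \<Sum>b\<in>B. ((-1) ^ k / fact (2 * k + 1) * g b ^ (2 * k + 1)) *\<^sub>R outer_prod b)"
    unfolding mpow_spectral_mat unfolding scaleR_spectral_mat unfolding spectral_mat_eq_sum by simp
  moreover have "(\<lambda>k. \<Sum>b\<in>B. ((-1) ^ k / fact (2 * k + 1) * g b ^ (2 * k + 1)) *\<^sub>R outer_prod b) sums
        (\<Sum>b\<in>B. sin (g b) *\<^sub>R outer_prod b)"
    by (intro sums_sum sums_scaleR_left sin_paired)
  ultimately have "(\<lambda>k. ((-1) ^ k / fact (2 * k + 1)) *\<^sub>R mpow (spectral_mat g) (2 * k + 1)) sums spectral_mat (\<lambda>b. sin (g b))"
    by (simp add: spectral_mat_eq_sum)
  thus ?thesis by (simp add: mat_sin_def sums_iff)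
qed

lemma cmat_spectral_mat: "cmat (spectral_mat f :: real^'n^'n) = spectral_mat (\<lambda>b. complex_of_real (f b))"
  by (simp add: cmat_def spectral_mat_def vec_eq_iff)

lemma spectral_mat_cmat_nth:
  fixes K :: "real^'c::finite^'n"
  shows "(spectral_mat h ** cmat K) $ i $ f = (\<Sum>b\<in>B. h b * of_real (b$i * (b \<bullet> (\<chi> k. K$k$f))))"
proof -
  have "(spectral_mat h ** cmat K) $ i $ f = (\<Sum>k\<in>UNIV. \<Sum>b\<in>B. h b * of_real (b$i * b$k) * of_real (K$k$f))"
    by (simp add: matrix_matrix_mult_def spectral_mat_def cmat_def sum_distrib_right)
  also have "\<dots> = (\<Sum>b\<in>B. \<Sum>k\<in>UNIV. h b * of_real (b$i * b$k) * of_real (K$k$f))"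
    by (rule sum.swap)
  also have "\<dots> = (\<Sum>b\<in>B. h b * of_real (b$i * (b \<bullet> (\<chi> k. K$k$f))))"
  proof (intro sum.cong refl)
    fix b
    show "(\<Sum>k\<in>UNIV. h b * of_real (b$i * b$k) * of_real (K$k$f)) = h b * of_real (b$i * (b \<bullet> (\<chi> k. K$k$f)))"
      by (simp add: inner_vec_def sum_distrib_left of_real_sum mult_ac)
  qed
  finally show ?thesis .
qed

lemma trace_spectral_mat_cmat:
  fixes K :: "real^'c::finite^'n"
  shows "trace (conj_transpose (spectral_mat h ** cmat K) ** (spectral_mat h ** cmat K)) =
         of_real (\<Sum>f\<in>UNIV. \<Sum>b\<in>B. (cmod (h b))\<^sup>2 * (b \<bullet> (\<chi> k. K$k$f))\<^sup>2)"
proof -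
  define c where "c b f = b \<bullet> (\<chi> k. K$k$f)" for b f
  have "(\<Sum>i\<in>UNIV. cnj ((spectral_mat h ** cmat K) $ i $ f) * (spectral_mat h ** cmat K) $ i $ f)
        = of_real (\<Sum>b\<in>B. (cmod (h b))\<^sup>2 * (c b f)\<^sup>2)" for f
  proof -
    have "(\<Sum>i\<in>UNIV. cnj ((spectral_mat h ** cmat K) $ i $ f) * (spectral_mat h ** cmat K) $ i $ f)
        = (\<Sum>i\<in>UNIV. (\<Sum>b\<in>B. cnj (h b) * of_real (b$i * c b f)) * (\<Sum>b'\<in>B. h b' * of_real (b'$i * c b' f)))"
      by (simp add: spectral_mat_cmat_nth c_def cnj_sum)
    also have "\<dots> = (\<Sum>i\<in>UNIV. \<Sum>b\<in>B. \<Sum>b'\<in>B. cnj (h b) * h b' * of_real (c b f * c b' f) * of_real (b$i * b'$i))"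
      unfolding sum_product by (intro sum.cong refl) (simp add: mult_ac)
    also have "\<dots> = (\<Sum>b\<in>B. \<Sum>b'\<in>B. cnj (h b) * h b' * of_real (c b f * c b' f) * of_real (\<Sum>i\<in>UNIV. b$i * b'$i))"
      by (simp add: sum.swap[of _ UNIV] sum_distrib_left)
    also have "\<dots> = (\<Sum>b\<in>B. \<Sum>b'\<in>B. if b = b' then cnj (h b) * h b' * of_real (c b f * c b' f) else 0)"
      by (intro sum.cong refl) (simp add: basis_inner_delta)
    also have "\<dots> = (\<Sum>b\<in>B. cnj (h b) * h b * of_real (c b f * c b f))"
      using finite_basis by (simp add: sum.delta)
    also have "\<dots> = of_real (\<Sum>b\<in>B. (cmod (h b))\<^sup>2 * (c b f)\<^sup>2)"
    proof -
      have "cnj (h b) * h b = of_real ((cmod (h b))\<^sup>2)" for b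
        using complex_norm_square[of "h b"] by (simp add: mult.commute)
      thus ?thesis by (simp add: of_real_sum power2_eq_square)
    qed
    finally show ?thesis .
  qed
  thus ?thesis
    by (simp add: trace_def matrix_matrix_mult_def conj_transpose_def c_def of_real_sum)
qed

text \<open>Since \<open>inverse 0 = 0\<close>, the scalar \<open>inverse\<close> is the pseudo-inverse of a real number.\<close>

lemma pinv_spectral_mat: "pinv (spectral_mat f :: real^'n^'n) = spectral_mat (\<lambda>b. inverse (f b))"
proof -
  have inverse_absorb: "x * inverse x * x = x" "inverse x * x * inverse x = inverse x" for x :: real
    by (cases "x = 0"; simp)+
  show ?thesis
    by (rule pinv_eqI) (simp_all add: spectral_mat_mult transpose_spectral_mat inverse_absorb)
qed

end

section \<open>Incidence matrix, Laplacian and centering matrix\<close>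

lemma matrix_mult_diag_nth: "(A ** diag_mat d) $ i $ j = A $ i $ j * d j"
proof -
  have "(A ** diag_mat d) $ i $ j = (\<Sum>k\<in>UNIV. if k = j then A $ i $ k * d k else 0)"
    by (simp add: matrix_matrix_mult_def diag_mat_def if_distrib[of "\<lambda>z. _ * z"] cong: if_cong)
  thus ?thesis by simp
qed

lemma centering_mult_vec_nth:
  fixes x :: "real^'n::finite"
  shows "(centering *v x) $ i = x $ i - (\<Sum>j\<in>UNIV. x $ j) / real CARD('n)"
proof -
  have "(centering *v x) $ i = (\<Sum>j\<in>UNIV. (if i = j then 1 else 0) * x $ j) - (\<Sum>j\<in>UNIV. x $ j / real CARD('n))"
    by (simp add: centering_def matrix_vector_mult_def mat_def left_diff_distrib sum_subtractf)
  thus ?thesis by (simp add: sum_divide_distrib[symmetric] if_distrib[of "\<lambda>z. z * _"] cong: if_cong)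
qed

lemma centering_mult_constant:
  fixes x :: "real^'n::finite"
  assumes "\<And>i j. x $ i = x $ j"
  shows "centering *v x = 0"
proof -
  have "(centering *v x) $ i = 0" for i
  proof -
    have "(\<Sum>j\<in>UNIV. x $ j) = (\<Sum>j\<in>(UNIV :: 'n set). x $ i)" by (intro sum.cong refl assms)
    thus ?thesis by (simp add: centering_mult_vec_nth)
  qed
  thus ?thesis by (simp add: vec_eq_iff)
qed

lemma centering_mult_sum_zero:
  fixes x :: "real^'n::finite"
  assumes "(\<Sum>j\<in>UNIV. x $ j) = 0"
  shows "centering *v x = x"
  using assms by (simp add: vec_eq_iff centering_mult_vec_nth)

definition incidence_col :: "('e::finite \<Rightarrow> 'n::finite) \<Rightarrow> ('e \<Rightarrow> 'n) \<Rightarrow> 'e \<Rightarrow> real^'n" where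
  "incidence_col src dst f = (\<chi> i. incidence src dst $ i $ f)"

lemma laplacian_nth:
  "laplacian src dst w $ i $ j = (\<Sum>f\<in>UNIV. incidence src dst $ i $ f * w f * incidence src dst $ j $ f)"
  using matrix_mult_diag_nth[of "incidence src dst" w]
  by (simp add: laplacian_def matrix_matrix_mult_def transpose_def)

lemma laplacian_mult_vec: "laplacian src dst w *v x = (\<Sum>f\<in>UNIV. (w f * (incidence_col src dst f \<bullet> x)) *\<^sub>R incidence_col src dst f)"
proof -
  have "(\<Sum>j\<in>UNIV. (\<Sum>f\<in>UNIV. incidence src dst $ i $ f * w f * incidence src dst $ j $ f) * x$j)
      = (\<Sum>f\<in>UNIV. w f * (\<Sum>j\<in>UNIV. incidence src dst $ j $ f * x$j) * incidence src dst $ i $ f)" for i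
  proof -
    have "(\<Sum>j\<in>UNIV. (\<Sum>f\<in>UNIV. incidence src dst $ i $ f * w f * incidence src dst $ j $ f) * x$j)
        = (\<Sum>j\<in>UNIV. \<Sum>f\<in>UNIV. incidence src dst $ i $ f * w f * incidence src dst $ j $ f * x$j)"
      by (simp add: sum_distrib_right)
    also have "\<dots> = (\<Sum>f\<in>UNIV. \<Sum>j\<in>UNIV. incidence src dst $ i $ f * w f * incidence src dst $ j $ f * x$j)"
      by (rule sum.swap)
    also have "\<dots> = (\<Sum>f\<in>UNIV. w f * (\<Sum>j\<in>UNIV. incidence src dst $ j $ f * x$j) * incidence src dst $ i $ f)"
      by (simp add: sum_distrib_left sum_distrib_right mult_ac)
    finally show ?thesis .
  qed
  thus ?thesis by (simp add: matrix_vector_mult_def laplacian_nth vec_eq_iff incidence_col_def inner_vec_def)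
qed

lemma laplacian_quadratic_form: "x \<bullet> (laplacian src dst w *v x) = (\<Sum>f\<in>UNIV. w f * (incidence_col src dst f \<bullet> x)\<^sup>2)"
  unfolding laplacian_mult_vec inner_sum_right by (simp add: inner_commute[of x] power2_eq_square mult.assoc)

lemma transpose_laplacian: "transpose (laplacian src dst w) = laplacian src dst w"
  by (simp add: vec_eq_iff transpose_def laplacian_nth mult_ac)

lemma incidence_col_inner:
  assumes "simple_graph src dst"
  shows "incidence_col src dst f \<bullet> x = x $ src f - x $ dst f"
proof -
  have sd: "src f \<noteq> dst f" using assms by (simp add: simple_graph_def)
  have "incidence_col src dst f \<bullet> x = (\<Sum>i\<in>UNIV. (if i = src f then 1 else if i = dst f then -1 else 0) * x$i)"
    by (simp add: incidence_col_def inner_vec_def incidence_def)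
  also have "\<dots> = (\<Sum>i\<in>UNIV. (if i = src f then x$i else 0) + (if i = dst f then - x$i else 0))"
    by (intro sum.cong refl) (use sd in auto)
  also have "\<dots> = x $ src f - x $ dst f" by (simp add: sum.distrib)
  finally show ?thesis .
qed

lemma connected_imp_constant:
  fixes x :: "real^'n::finite" and src dst :: "'e::finite \<Rightarrow> 'n"
  assumes "graph_connected src dst" and "\<And>f. x $ src f = x $ dst f"
  shows "x $ u = x $ v"
proof -
  have "(u, v) \<in> (adj_rel src dst)\<^sup>*" using assms(1) by (simp add: graph_connected_def)
  thus ?thesis
  proof (induction rule: rtrancl_induct)
    case base thus ?case by simp
  next
    case (step y z)
    hence "x $ y = x $ z" using assms(2) by (auto simp: adj_rel_def)
    thus ?case using step.IH by simp
  qed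
qed

section \<open>The performance in the Laplacian eigenbasis\<close>

locale delayed_consensus = orthonormal_basis B for B :: "(real^'n::finite) set" +
  fixes src dst :: "'e::finite \<Rightarrow> 'n" and w :: "'e \<Rightarrow> real" and tau :: real
  assumes simple: "simple_graph src dst" and connected: "graph_connected src dst"
    and w_pos: "\<And>f. 0 < w f" and tau_nonneg: "0 \<le> tau"
    and tau_less: "tau * largest_eigenvalue (laplacian src dst w) < pi / 2"
    and eigenvector: "\<And>b. b \<in> B \<Longrightarrow>
      laplacian src dst w *v b = (b \<bullet> (laplacian src dst w *v b)) *\<^sub>R b"
begin

abbreviation L :: "real^'n^'n" where
  "L \<equiv> laplacian src dst w"

definition eig :: "real^'n \<Rightarrow> real" where
  "eig b = b \<bullet> (L *v b)"

definition centering_eig :: "real^'n \<Rightarrow> real" where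
  "centering_eig b = (if eig b = 0 then 0 else 1)"

lemma laplacian_mult_basis: "b \<in> B \<Longrightarrow> L *v b = eig b *\<^sub>R b"
  unfolding eig_def by (rule eigenvector)

lemma laplacian_spectral: "L = spectral_mat eig"
  by (rule spectral_matI) (rule laplacian_mult_basis)

lemma eig_eq_quadratic_form: "eig b = (\<Sum>f\<in>UNIV. w f * (incidence_col src dst f \<bullet> b)\<^sup>2)"
  by (simp add: eig_def laplacian_quadratic_form)

lemma eig_nonneg: "0 \<le> eig b"
  unfolding eig_eq_quadratic_form using w_pos by (intro sum_nonneg) (simp add: less_imp_le)

lemma eigenvalues_subset: "eigenvalues L \<subseteq> eig ` B"
proof
  fix c assume "c \<in> eigenvalues L"
  then obtain v where v: "v \<noteq> 0" "L *v v = c *\<^sub>R v" by (auto simp: eigenvalues_def)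
  have "\<exists>b\<in>B. b \<bullet> v \<noteq> 0"
  proof (rule ccontr)
    assume "\<not> ?thesis"
    hence "(\<Sum>b\<in>B. (b \<bullet> v) *\<^sub>R b) = 0" by simp
    thus False using v(1) basis_expansion[of v] by argo
  qed
  then obtain b where b: "b \<in> B" "b \<bullet> v \<noteq> 0" by blast
  have "c * (b \<bullet> v) = b \<bullet> (L *v v)" using v(2) by simp
  also have "\<dots> = (L *v b) \<bullet> v" by (rule inner_mult_vec_symmetric[OF transpose_laplacian])
  also have "\<dots> = eig b * (b \<bullet> v)" using laplacian_mult_basis[OF b(1)] by simp
  finally have "c = eig b" using b(2) by simp
  thus "c \<in> eig ` B" using b(1) by blast
qed

lemma tau_eig_bounds:
  assumes b: "b \<in> B"
  shows "0 \<le> tau * eig b" "tau * eig b < pi / 2"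
proof -
  have "b \<noteq> 0" using basis_norm[OF b] by auto
  hence "eig b \<in> eigenvalues L"
    using laplacian_mult_basis[OF b] unfolding eigenvalues_def by blast
  moreover have "finite (eigenvalues L)"
    using eigenvalues_subset finite_basis finite_subset by blast
  ultimately have "tau * eig b \<le> tau * largest_eigenvalue L"
    unfolding largest_eigenvalue_def using tau_nonneg by (simp add: mult_left_mono)
  thus "tau * eig b < pi / 2" using tau_less by simp
  show "0 \<le> tau * eig b" using tau_nonneg eig_nonneg by simp
qed

lemma eig_zero_constant:
  assumes "eig b = 0"
  shows "b $ i = b $ j"
proof (rule connected_imp_constant[OF connected])
  fix f
  have "(\<Sum>f\<in>UNIV. w f * (incidence_col src dst f \<bullet> b)\<^sup>2) = 0"
    using assms by (simp add: eig_eq_quadratic_form)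
  hence "w f * (incidence_col src dst f \<bullet> b)\<^sup>2 = 0"
    using w_pos by (subst (asm) sum_nonneg_eq_0_iff) (auto simp: less_imp_le)
  thus "b $ src f = b $ dst f" using w_pos[of f] incidence_col_inner[OF simple, of f b] by simp
qed

lemma eig_nonzero_sum_zero:
  assumes b: "b \<in> B" and "eig b \<noteq> 0"
  shows "(\<Sum>j\<in>UNIV. b $ j) = 0"
proof -
  define one where "one = (\<chi> i::'n. (1::real))"
  have "L *v one = 0"
    by (simp add: laplacian_mult_vec incidence_col_inner[OF simple] one_def)
  have "eig b * (one \<bullet> b) = one \<bullet> (L *v b)" using laplacian_mult_basis[OF b] by simp
  also have "\<dots> = (L *v one) \<bullet> b" by (rule inner_mult_vec_symmetric[OF transpose_laplacian])
  finally have "one \<bullet> b = 0" using \<open>L *v one = 0\<close> assms(2) by simp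
  thus ?thesis by (simp add: one_def inner_vec_def)
qed

lemma centering_spectral: "centering = spectral_mat centering_eig"
  by (rule spectral_matI)
     (auto simp: centering_eig_def centering_mult_constant eig_zero_constant
        centering_mult_sum_zero eig_nonzero_sum_zero)

definition mode_gain_integral :: "real^'n \<Rightarrow> real" where
  "mode_gain_integral b = centering_eig b * (pi * cos (tau * eig b) / (eig b * (1 - sin (tau * eig b))))"

definition resistance_eig :: "real^'n \<Rightarrow> real" where
  "resistance_eig b = eig b * (centering_eig b - sin (tau * eig b)) / cos (tau * eig b)"

abbreviation resistance_mat :: "real^'n^'n" where
  "resistance_mat \<equiv> L ** matrix_inv (mat_cos (tau *\<^sub>R L)) ** (centering - mat_sin (tau *\<^sub>R L))"

lemma delay_gain_eig:
  assumes "b \<in> B" "eig b \<noteq> 0"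
  shows "delay_gain (eig b) tau"
proof
  show "0 < eig b" using eig_nonneg assms(2) by (simp add: order_less_le)
  show "eig b * tau < pi / 2" using tau_eig_bounds[OF assms(1)] by (simp add: mult.commute)
qed (rule tau_nonneg)

lemma cos_tau_eig_pos:
  assumes "b \<in> B"
  shows "0 < cos (tau * eig b)"
  using tau_eig_bounds[OF assms] by (intro cos_gt_zero_pi) linarith+

lemma resistance_mat_spectral: "resistance_mat = spectral_mat resistance_eig"
proof -
  have tau_L: "tau *\<^sub>R L = spectral_mat (\<lambda>b. tau * eig b)"
    by (simp add: laplacian_spectral scaleR_spectral_mat)
  have inv_cos: "matrix_inv (spectral_mat (\<lambda>b. cos (tau * eig b)))
      = spectral_mat (\<lambda>b. inverse (cos (tau * eig b)))"
    using cos_tau_eig_pos by (intro matrix_inv_spectral_mat) force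
  show ?thesis
    unfolding tau_L mat_cos_spectral_mat mat_sin_spectral_mat inv_cos centering_spectral
    unfolding laplacian_spectral spectral_mat_diff spectral_mat_mult
    by (rule spectral_mat_cong) (simp add: resistance_eig_def divide_inverse)
qed

lemma inverse_resistance_eig:
  assumes b: "b \<in> B"
  shows "inverse (resistance_eig b) = mode_gain_integral b / pi"
proof (cases "eig b = 0")
  case False
  interpret delay_gain "eig b" tau using delay_gain_eig[OF b False] .
  show ?thesis
    using False sin_lt_one cos_tau_eig_pos[OF b]
    by (simp add: resistance_eig_def mode_gain_integral_def centering_eig_def mult.commute[of tau])
qed (simp add: resistance_eig_def mode_gain_integral_def centering_eig_def)

lemma r_eff_resistance_mat:
  "r_eff resistance_mat (src f) (dst f)
     = (\<Sum>b\<in>B. mode_gain_integral b / pi * (incidence_col src dst f \<bullet> b)\<^sup>2)"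
proof -
  have "r_eff resistance_mat (src f) (dst f)
      = (\<Sum>b\<in>B. inverse (resistance_eig b) * (b $ src f - b $ dst f)\<^sup>2)"
    by (simp add: resistance_mat_spectral r_eff_def pinv_spectral_mat spectral_mat_nth
        sum_subtractf sum.distrib sum_distrib_left power2_eq_square algebra_simps)
  also have "\<dots> = (\<Sum>b\<in>B. mode_gain_integral b / pi * (incidence_col src dst f \<bullet> b)\<^sup>2)"
    by (intro sum.cong refl) (simp add: inverse_resistance_eig incidence_col_inner[OF simple])
  finally show ?thesis .
qed

lemma delay_char_eig_nonzero:
  assumes "b \<in> B" "\<omega> \<noteq> 0"
  shows "delay_char (eig b) tau (\<i> * of_real \<omega>) \<noteq> 0"
proof (cases "eig b = 0")
  case False
  interpret delay_gain "eig b" tau using delay_gain_eig[OF assms(1) False] .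
  show ?thesis by (rule char_nonzero) simp
qed (use assms(2) in \<open>simp add: delay_char_def\<close>)

lemma noise_gain_col:
  "(\<chi> k. (incidence src dst ** diag_mat w ** diag_mat d) $ k $ f) = (w f * d f) *\<^sub>R incidence_col src dst f"
  by (simp add: vec_eq_iff matrix_mult_diag_nth incidence_col_def)

lemma transfer_spectral:
  assumes "\<omega> \<noteq> 0"
  shows "transfer src dst w tau sig (\<i> * of_real \<omega>) =
    spectral_mat (\<lambda>b. of_real (centering_eig b) / delay_char (eig b) tau (\<i> * of_real \<omega>)) **
    cmat (incidence src dst ** diag_mat w ** diag_mat (\<lambda>e. sqrt (sig e)))"
proof -
  have char: "mat (\<i> * of_real \<omega>) + mat (exp (- of_real tau * (\<i> * of_real \<omega>))) ** cmat L
      = spectral_mat (\<lambda>b. delay_char (eig b) tau (\<i> * of_real \<omega>))"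
    unfolding laplacian_spectral cmat_spectral_mat mat_mult_spectral_mat
    unfolding spectral_mat_const[symmetric] spectral_mat_add
    by (rule spectral_mat_cong) (simp add: delay_char_def mult.commute)
  have inv_char: "matrix_inv (spectral_mat (\<lambda>b. delay_char (eig b) tau (\<i> * of_real \<omega>)))
      = spectral_mat (\<lambda>b. inverse (delay_char (eig b) tau (\<i> * of_real \<omega>)))"
    using delay_char_eig_nonzero assms by (intro matrix_inv_spectral_mat) auto
  show ?thesis
    unfolding transfer_def char inv_char centering_spectral cmat_spectral_mat spectral_mat_mult
    by (simp add: divide_inverse)
qed

lemma trace_transfer:
  assumes "\<omega> \<noteq> 0"
  shows "Re (trace (conj_transpose (transfer src dst w tau sig (\<i> * of_real \<omega>)) **
                    transfer src dst w tau sig (\<i> * of_real \<omega>)))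
       = (\<Sum>f\<in>UNIV. \<Sum>b\<in>B. centering_eig b * sq_gain (eig b) tau \<omega> *
                             ((w f * sqrt (sig f))\<^sup>2 * (incidence_col src dst f \<bullet> b)\<^sup>2))"
proof -
  have "(cmod (of_real (centering_eig b) / delay_char (eig b) tau (\<i> * of_real \<omega>)))\<^sup>2
      = centering_eig b * sq_gain (eig b) tau \<omega>" for b
    by (simp add: centering_eig_def sq_gain_def norm_divide power_divide)
  thus ?thesis
    unfolding transfer_spectral[OF assms] trace_spectral_mat_cmat noise_gain_col
    by (simp add: inner_commute power_mult_distrib mult_ac)
qed

lemma mode_has_integral:
  assumes b: "b \<in> B"
  shows "((\<lambda>\<omega>. centering_eig b * sq_gain (eig b) tau \<omega>) has_integral mode_gain_integral b) UNIV"
proof (cases "eig b = 0")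
  case False
  interpret delay_gain "eig b" tau using delay_gain_eig[OF b False] .
  show ?thesis
    using has_integral_mult_right[OF sq_gain_has_integral[OF l_pos t_nonneg lt_less], of 1] False
    by (simp add: mode_gain_integral_def centering_eig_def mult.commute[of tau])
qed (simp add: mode_gain_integral_def centering_eig_def)

lemma rho_ss_eq:
  "rho_ss src dst w tau sig = 1 / (2 * pi) *
     (\<Sum>f\<in>UNIV. \<Sum>b\<in>B. mode_gain_integral b * ((w f * sqrt (sig f))\<^sup>2 * (incidence_col src dst f \<bullet> b)\<^sup>2))"
proof -
  have "((\<lambda>\<omega>. \<Sum>f\<in>UNIV. \<Sum>b\<in>B. centering_eig b * sq_gain (eig b) tau \<omega> *
                             ((w f * sqrt (sig f))\<^sup>2 * (incidence_col src dst f \<bullet> b)\<^sup>2))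
      has_integral (\<Sum>f\<in>UNIV. \<Sum>b\<in>B. mode_gain_integral b * ((w f * sqrt (sig f))\<^sup>2 * (incidence_col src dst f \<bullet> b)\<^sup>2)))
      UNIV"
    by (intro has_integral_sum has_integral_mult_left mode_has_integral) (simp_all add: finite_basis)
  hence "((\<lambda>\<omega>. Re (trace (conj_transpose (transfer src dst w tau sig (\<i> * of_real \<omega>)) **
                    transfer src dst w tau sig (\<i> * of_real \<omega>)))) has_integral
      (\<Sum>f\<in>UNIV. \<Sum>b\<in>B. mode_gain_integral b * ((w f * sqrt (sig f))\<^sup>2 * (incidence_col src dst f \<bullet> b)\<^sup>2)))
      UNIV"
    \<comment> \<open>\<open>transfer\<close> is a junk value at \<open>\<omega> = 0\<close>, where \<open>i \<omega> I + L\<close> is singular\<close>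
    by (rule has_integral_spike_finite[of "{0}", rotated 2]) (simp_all add: trace_transfer)
  thus ?thesis unfolding rho_ss_def by (simp add: integral_unique)
qed

lemma rho_ss_eq_r_eff:
  assumes "\<And>f. 0 \<le> sig f"
  shows "rho_ss src dst w tau sig = (\<Sum>f\<in>UNIV. (w f)\<^sup>2 * sig f * r_eff resistance_mat (src f) (dst f)) / 2"
  using assms
  by (simp add: rho_ss_eq r_eff_resistance_mat power_mult_distrib sum_distrib_left sum_divide_distrib
      mult_ac)

lemma rho_ss_has_derivative:
  assumes nonneg: "\<And>f. 0 \<le> sigma2 f" and pos: "0 < sigma2 e"
  shows "((\<lambda>t. rho_ss src dst w tau (sigma2(e := t))) has_real_derivative
           1/2 * (w e)\<^sup>2 * r_eff resistance_mat (src e) (dst e)) (at (sigma2 e))"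
proof -
  define c where "c f = (w f)\<^sup>2 * r_eff resistance_mat (src f) (dst f) / 2" for f
  have affine: "rho_ss src dst w tau (sigma2(e := t)) = (\<Sum>f\<in>UNIV - {e}. c f * sigma2 f) + c e * t"
    if "t \<in> {0<..}" for t
  proof -
    have "rho_ss src dst w tau (sigma2(e := t)) = (\<Sum>f\<in>UNIV. c f * (sigma2(e := t)) f)"
      using that nonneg by (subst rho_ss_eq_r_eff) (auto simp: c_def sum_divide_distrib mult_ac)
    also have "\<dots> = c e * t + (\<Sum>f\<in>UNIV - {e}. c f * sigma2 f)"
      by (subst sum.remove[of UNIV e]) (auto intro!: sum.cong)
    finally show ?thesis by simp
  qed
  have "((\<lambda>t. (\<Sum>f\<in>UNIV - {e}. c f * sigma2 f) + c e * t) has_real_derivative c e) (at (sigma2 e))"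
    by (auto intro!: derivative_eq_intros)
  hence "((\<lambda>t. rho_ss src dst w tau (sigma2(e := t))) has_real_derivative c e) (at (sigma2 e))"
    by (rule has_field_derivative_transform_within_open[OF _ open_greaterThan]) (use pos affine in auto)
  thus ?thesis by (simp add: c_def)
qed

end

theorem theorem9:
  fixes src dst :: "'e::finite \<Rightarrow> 'n::finite"
    and w :: "'e \<Rightarrow> real" and \<tau> :: real and sigma2 :: "'e \<Rightarrow> real" and e :: 'e
  assumes "simple_graph src dst"
    and "graph_connected src dst"
    and "\<And>f. w f > 0"
    and "\<tau> \<ge> 0"
    and "\<tau> * largest_eigenvalue (laplacian src dst w) < pi / 2"
    and "\<And>f. sigma2 f > 0"
  shows "((\<lambda>t. rho_ss src dst w \<tau> (sigma2(e := t))) has_real_derivative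
           (1/2 * (w e)^2 *
            r_eff (laplacian src dst w ** matrix_inv (mat_cos (\<tau> *\<^sub>R laplacian src dst w))
                   ** (centering - mat_sin (\<tau> *\<^sub>R laplacian src dst w)))
                  (src e) (dst e)))
         (at (sigma2 e))"
proof -
  obtain B where "orthonormal_basis B"
    and "\<And>b. b \<in> B \<Longrightarrow> laplacian src dst w *v b = (b \<bullet> (laplacian src dst w *v b)) *\<^sub>R b"
    using symmetric_orthonormal_eigenbasis[OF transpose_laplacian] by blast
  then interpret delayed_consensus B src dst w \<tau>
    using assms by (simp add: delayed_consensus_def delayed_consensus_axioms_def)
  show ?thesis
    using rho_ss_has_derivative[of sigma2 e] assms(6) by (simp add: less_imp_le)
qed

end
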